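(* For every enhanced Gelfand--Zetlin pattern $P$ with top row $\lambda$, the cell $C_P$ is nonempty and homeomorphic to an open ball of dimension $\mathrm{rk}\,P$.
   Context: Let $\lambda=(\lambda_1\ge\dots\ge\lambda_n)$ be a partition. Coordinates $y_{ij}$ ($i,j\ge1$, $i+j\le n$) on $\mathbb{R}^{n(n-1)/2}$, with $y_{0j}=\lambda_{n+1-j}$; $GZ(\lambda)$ is defined by $y_{i-1,j}\le y_{ij}\le y_{i-1,j+1}$. A GZ pattern with top row $\lambda$ is an integer array $a_{ij}$, $0\le i\le n-1$, $1\le j\le n-i$, with $a_{0j}=\lambda_{n+1-j}$ and $a_{i-1,j}\le a_{ij}\le a_{i-1,j+1}$. An enhanced GZ pattern is such an array with encircled entries and edges (each joining $a_{ij}$, $i\ge1$, with $a_{i-1,j}$ or $a_{i-1,j+1}$) such that: (1) row $0$ entries are encircled; (2) joined entries are equal, the lower one encircled; (3) for $i\ge1$: both $a_{ij},a_{i,j+1}$ are joined to $a_{i-1,j+1}$ iff both are joined to $a_{i+1,j}$; (4) if $a_{0j}=a_{0,j+1}$ then $a_{1j}$ is encircled and joined to both; (5) if $a_{i-1,j}<a_{i-1,j+1}$ and $a_{ij}=a_{i-1,j}$, then $a_{ij}$ is encircled and joined to $a_{i-1,j}$; (6) if $a_{i-1,j}<a_{i-1,j+1}$, $a_{ij}=a_{i-1,j+1}$, $a_{ij}$ encircled, then joined to $a_{i-1,j+1}$; (7) if $a_{i-1,j}=a_{i-1,j+1}=a_{ij}$ and the two upper entries are connected by a path of edges, then $a_{ij}$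 is encircled and joined to both; (8) if $a_{i-1,j}=a_{i-1,j+1}=a_{ij}$ and $a_{ij}$ is encircled, it is joined to at least one of them. The rank $\mathrm{rk}\,P$ is the number of non-encircled entries. Cell $C_P$: for each $i\ge1$ impose: if $a_{ij}$ is joined to $a_{i-1,j}$ (resp. $a_{i-1,j+1}$), then $y_{ij}=y_{i-1,j}$ (resp. $y_{ij}=y_{i-1,j+1}$); if no edge goes up from $a_{ij}$ and it is encircled, $y_{ij}=a_{ij}$; if no edge goes up and it is not encircled, impose $a_{ij}-1<y_{ij}$ if $a_{ij}-a_{i-1,j}\ge2$, else $y_{i-1,j}<y_{ij}$, and $y_{ij}<y_{i-1,j+1}$ if $a_{i-1,j+1}=a_{ij}$, else $y_{ij}<a_{ij}$. Let $\widehat{C_P}$ be the set so defined, $L$ its affine span, and $C_P=\widehat{C_P}\cap(GZ(\lambda)\cap L)^0$, where $(\cdot)^0$ is the relative interior in $L$. *)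

theory Defs
  imports "HOL-Analysis.Analysis"
begin

definition is_partition :: "nat \<Rightarrow> (nat \<Rightarrow> int) \<Rightarrow> bool" where
  "is_partition n lam \<longleftrightarrow>
     (\<forall>k. 1 \<le> k \<and> k < n \<longrightarrow> lam (k+1) \<le> lam k) \<and> (\<forall>k. 1 \<le> k \<and> k \<le> n \<longrightarrow> 0 \<le> lam k)"

definition gz_pos :: "nat \<Rightarrow> nat \<Rightarrow> nat \<Rightarrow> bool" where
  "gz_pos n i j \<longleftrightarrow> 1 \<le> j \<and> i + j \<le> n"

definition gz_coords :: "nat \<Rightarrow> (nat \<times> nat) set" where
  "gz_coords n = {(i,j). 1 \<le> i \<and> 1 \<le> j \<and> i + j \<le> n}"

text \<open>R^(n(n-1)/2) realised as the real functions on gz_coords n (zero elsewhere),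
  with the (product = Euclidean) topology.\<close>
definition gz_space :: "nat \<Rightarrow> (nat \<times> nat \<Rightarrow> real) set" where
  "gz_space n = {y. \<forall>p. p \<notin> gz_coords n \<longrightarrow> y p = 0}"

definition yext :: "nat \<Rightarrow> (nat \<Rightarrow> int) \<Rightarrow> (nat \<times> nat \<Rightarrow> real) \<Rightarrow> nat \<Rightarrow> nat \<Rightarrow> real" where
  "yext n lam y i j = (if i = 0 then real_of_int (lam (n + 1 - j)) else y (i, j))"

definition GZ_polytope :: "nat \<Rightarrow> (nat \<Rightarrow> int) \<Rightarrow> (nat \<times> nat \<Rightarrow> real) set" where
  "GZ_polytope n lam = {y \<in> gz_space n. \<forall>i j. 1 \<le> i \<and> gz_pos n i j \<longrightarrow>
      yext n lam y (i-1) j \<le> y (i,j) \<and> y (i,j) \<le> yext n lam y (i-1) (j+1)}"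

definition is_GZ_pattern :: "nat \<Rightarrow> (nat \<Rightarrow> int) \<Rightarrow> (nat \<Rightarrow> nat \<Rightarrow> int) \<Rightarrow> bool" where
  "is_GZ_pattern n lam a \<longleftrightarrow>
     (\<forall>j. 1 \<le> j \<and> j \<le> n \<longrightarrow> a 0 j = lam (n + 1 - j)) \<and>
     (\<forall>i j. 1 \<le> i \<and> gz_pos n i j \<longrightarrow> a (i-1) j \<le> a i j \<and> a i j \<le> a (i-1) (j+1))"

text \<open>Enhanced pattern data: entries a, encircled entries E, and edges going up:
  EL i j means a_ij is joined to a_(i-1),j; ER i j means a_ij is joined to a_(i-1),(j+1).\<close>

definition gz_edge :: "(nat \<Rightarrow> nat \<Rightarrow> bool) \<Rightarrow> (nat \<Rightarrow> nat \<Rightarrow> bool) \<Rightarrow> nat \<times> nat \<Rightarrow> nat \<times> nat \<Rightarrow> bool" where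
  "gz_edge EL ER p q \<longleftrightarrow>
     (\<exists>i j. 1 \<le> i \<and>
        ((EL i j \<and> ((p = (i,j) \<and> q = (i-1,j)) \<or> (q = (i,j) \<and> p = (i-1,j)))) \<or>
         (ER i j \<and> ((p = (i,j) \<and> q = (i-1,j+1)) \<or> (q = (i,j) \<and> p = (i-1,j+1))))))"

definition gz_connected :: "(nat \<Rightarrow> nat \<Rightarrow> bool) \<Rightarrow> (nat \<Rightarrow> nat \<Rightarrow> bool) \<Rightarrow> nat \<times> nat \<Rightarrow> nat \<times> nat \<Rightarrow> bool" where
  "gz_connected EL ER = (gz_edge EL ER)\<^sup>*\<^sup>*"

definition is_enhanced_GZ :: "nat \<Rightarrow> (nat \<Rightarrow> int) \<Rightarrow> (nat \<Rightarrow> nat \<Rightarrow> int) \<Rightarrow> (nat \<Rightarrow> nat \<Rightarrow> bool)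
     \<Rightarrow> (nat \<Rightarrow> nat \<Rightarrow> bool) \<Rightarrow> (nat \<Rightarrow> nat \<Rightarrow> bool) \<Rightarrow> bool" where
  "is_enhanced_GZ n lam a E EL ER \<longleftrightarrow>
     is_GZ_pattern n lam a \<and>
     \<comment> \<open>encircling and edges only concern entries of the pattern; edges go up from rows i >= 1\<close>
     (\<forall>i j. E i j \<longrightarrow> gz_pos n i j) \<and>
     (\<forall>i j. EL i j \<longrightarrow> 1 \<le> i \<and> gz_pos n i j) \<and>
     (\<forall>i j. ER i j \<longrightarrow> 1 \<le> i \<and> gz_pos n i j) \<and>
     \<comment> \<open>(1)\<close>
     (\<forall>j. gz_pos n 0 j \<longrightarrow> E 0 j) \<and>
     \<comment> \<open>(2)\<close>
     (\<forall>i j. EL i j \<longrightarrow> a i j = a (i-1) j \<and> E i j) \<and>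
     (\<forall>i j. ER i j \<longrightarrow> a i j = a (i-1) (j+1) \<and> E i j) \<and>
     \<comment> \<open>(3)\<close>
     (\<forall>i j. 1 \<le> i \<and> gz_pos n i j \<and> gz_pos n i (j+1) \<longrightarrow>
        ((ER i j \<and> EL i (j+1)) \<longleftrightarrow> (EL (i+1) j \<and> ER (i+1) j))) \<and>
     \<comment> \<open>(4)\<close>
     (\<forall>j. gz_pos n 0 j \<and> gz_pos n 0 (j+1) \<and> a 0 j = a 0 (j+1) \<longrightarrow>
        E 1 j \<and> EL 1 j \<and> ER 1 j) \<and>
     \<comment> \<open>(5)\<close>
     (\<forall>i j. 1 \<le> i \<and> gz_pos n i j \<and> a (i-1) j < a (i-1) (j+1) \<and> a i j = a (i-1) j \<longrightarrow>
        E i j \<and> EL i j) \<and>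
     \<comment> \<open>(6)\<close>
     (\<forall>i j. 1 \<le> i \<and> gz_pos n i j \<and> a (i-1) j < a (i-1) (j+1) \<and> a i j = a (i-1) (j+1) \<and> E i j \<longrightarrow>
        ER i j) \<and>
     \<comment> \<open>(7)\<close>
     (\<forall>i j. 1 \<le> i \<and> gz_pos n i j \<and> a (i-1) j = a (i-1) (j+1) \<and> a i j = a (i-1) j \<and>
        gz_connected EL ER (i-1, j) (i-1, j+1) \<longrightarrow> E i j \<and> EL i j \<and> ER i j) \<and>
     \<comment> \<open>(8)\<close>
     (\<forall>i j. 1 \<le> i \<and> gz_pos n i j \<and> a (i-1) j = a (i-1) (j+1) \<and> a i j = a (i-1) j \<and> E i j \<longrightarrow>
        EL i j \<or> ER i j)"

definition gz_rank :: "nat \<Rightarrow> (nat \<Rightarrow> nat \<Rightarrow> bool) \<Rightarrow> nat" where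
  "gz_rank n E = card {(i,j). gz_pos n i j \<and> \<not> E i j}"

definition cell_hat :: "nat \<Rightarrow> (nat \<Rightarrow> int) \<Rightarrow> (nat \<Rightarrow> nat \<Rightarrow> int) \<Rightarrow> (nat \<Rightarrow> nat \<Rightarrow> bool)
     \<Rightarrow> (nat \<Rightarrow> nat \<Rightarrow> bool) \<Rightarrow> (nat \<Rightarrow> nat \<Rightarrow> bool) \<Rightarrow> (nat \<times> nat \<Rightarrow> real) set" where
  "cell_hat n lam a E EL ER = {y \<in> gz_space n. \<forall>i j. 1 \<le> i \<and> gz_pos n i j \<longrightarrow>
      (EL i j \<longrightarrow> y (i,j) = yext n lam y (i-1) j) \<and>
      (ER i j \<longrightarrow> y (i,j) = yext n lam y (i-1) (j+1)) \<and>
      (\<not> EL i j \<and> \<not> ER i j \<and> E i j \<longrightarrow> y (i,j) = real_of_int (a i j)) \<and>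
      (\<not> EL i j \<and> \<not> ER i j \<and> \<not> E i j \<longrightarrow>
         (if a i j - a (i-1) j \<ge> 2 then real_of_int (a i j) - 1 < y (i,j)
          else yext n lam y (i-1) j < y (i,j)) \<and>
         (if a (i-1) (j+1) = a i j then y (i,j) < yext n lam y (i-1) (j+1)
          else y (i,j) < real_of_int (a i j)))}"

definition affine_span_fun :: "('p \<Rightarrow> real) set \<Rightarrow> ('p \<Rightarrow> real) set" where
  "affine_span_fun S = {z. \<exists>F u. finite F \<and> F \<noteq> {} \<and> F \<subseteq> S \<and> sum u F = 1 \<and>
      z = (\<lambda>p. \<Sum>x\<in>F. u x * x p)}"

definition cell :: "nat \<Rightarrow> (nat \<Rightarrow> int) \<Rightarrow> (nat \<Rightarrow> nat \<Rightarrow> int) \<Rightarrow> (nat \<Rightarrow> nat \<Rightarrow> bool)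
     \<Rightarrow> (nat \<Rightarrow> nat \<Rightarrow> bool) \<Rightarrow> (nat \<Rightarrow> nat \<Rightarrow> bool) \<Rightarrow> (nat \<times> nat \<Rightarrow> real) set" where
  "cell n lam a E EL ER =
     (let Ch = cell_hat n lam a E EL ER; L = affine_span_fun Ch in
      Ch \<inter> ((top_of_set L) interior_of (GZ_polytope n lam \<inter> L)))"

definition open_ball_dim :: "nat \<Rightarrow> (nat \<Rightarrow> real) set" where
  "open_ball_dim k = {x. (\<forall>i\<ge>k. x i = 0) \<and> (\<Sum>i<k. (x i)\<^sup>2) < 1}"

end

theory Submission
  imports Defs
begin

text \<open>Every entry of a point of \<open>cell_hat\<close> is either tied by an edge to an entry of the row
  above, fixed by encircling, or free; rule (3) makes the edge constraints consistent. Hence all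
  entries are affine functions of the \<open>rk P\<close> free ones, and \<open>cell_hat\<close> is the image of an open
  polyhedron of \<open>\<real>^(rk P)\<close> under an injective affine map whose image of all of \<open>\<real>^(rk P)\<close>
  is the affine span \<open>L\<close>. In these coordinates \<open>GZ(\<lambda>) \<inter> L\<close> is a closed polyhedron, whose relative
  interior is cut out by the strict versions of its nonconstant inequalities, so \<open>C_P\<close> is
  homeomorphic to an open polyhedron. That polyhedron is bounded, since it lies in \<open>GZ(\<lambda>)\<close>, and
  nonempty: a point is built row by row, putting each free entry in the middle of its allowed
  interval. Finally, a bounded open polyhedron around a point is homeomorphic to the open ball by
  radially rescaling with its Minkowski gauge.\<close>

section \<open>Affine forms and polyhedra in \<open>\<real>^k\<close>\<close>

definition coord_space :: "nat \<Rightarrow> (nat \<Rightarrow> real) set" where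
  "coord_space k = {x. \<forall>i\<ge>k. x i = 0}"

type_synonym affine_form = "real \<times> (nat \<Rightarrow> real)"

definition lin_form :: "nat \<Rightarrow> (nat \<Rightarrow> real) \<Rightarrow> (nat \<Rightarrow> real) \<Rightarrow> real" where
  "lin_form k c x = (\<Sum>i<k. c i * x i)"

definition aff_val :: "nat \<Rightarrow> affine_form \<Rightarrow> (nat \<Rightarrow> real) \<Rightarrow> real" where
  "aff_val k g x = fst g + lin_form k (snd g) x"

definition const_form :: "real \<Rightarrow> affine_form" where
  "const_form c = (c, \<lambda>_. 0)"

definition coord_form :: "nat \<Rightarrow> affine_form" where
  "coord_form m = (0, (\<lambda>_. 0)(m := 1))"

lemma aff_val_coord_form: "m < k \<Longrightarrow> aff_val k (coord_form m) x = x m"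
proof -
  assume "m < k"
  have "(\<Sum>i<k. ((\<lambda>_. 0)(m := 1)) i * x i) = (\<Sum>i<k. if i = m then x m else 0)"
    by (intro sum.cong) auto
  then show ?thesis using \<open>m < k\<close> by (simp add: coord_form_def aff_val_def lin_form_def)
qed

definition diff_form :: "affine_form \<Rightarrow> affine_form \<Rightarrow> affine_form" where
  "diff_form g h = (fst g - fst h, \<lambda>i. snd g i - snd h i)"

definition nonconst_form :: "nat \<Rightarrow> affine_form \<Rightarrow> bool" where
  "nonconst_form k g \<longleftrightarrow> (\<exists>i<k. snd g i \<noteq> 0)"

definition open_polyhedron :: "nat \<Rightarrow> affine_form set \<Rightarrow> (nat \<Rightarrow> real) set" where
  "open_polyhedron k G = {x \<in> coord_space k. \<forall>g\<in>G. 0 < aff_val k g x}"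

definition closed_polyhedron :: "nat \<Rightarrow> affine_form set \<Rightarrow> (nat \<Rightarrow> real) set" where
  "closed_polyhedron k G = {x \<in> coord_space k. \<forall>g\<in>G. 0 \<le> aff_val k g x}"

lemma aff_val_const_form [simp]: "aff_val k (const_form c) x = c"
  by (simp add: const_form_def aff_val_def lin_form_def)

lemma aff_val_diff_form [simp]: "aff_val k (diff_form g h) x = aff_val k g x - aff_val k h x"
  by (simp add: diff_form_def aff_val_def lin_form_def sum_subtractf algebra_simps)

lemma nonconst_form_diff_self: "\<not> nonconst_form k (diff_form g g)"
  by (simp add: diff_form_def nonconst_form_def)

lemma aff_val_if_not_nonconst: "\<not> nonconst_form k g \<Longrightarrow> aff_val k g x = fst g"
  by (simp add: nonconst_form_def aff_val_def lin_form_def)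

lemma aff_val_affine_comb:
  assumes "sum u F = 1"
  shows "aff_val k g (\<lambda>i. \<Sum>v\<in>F. u v * v i) = (\<Sum>v\<in>F. u v * aff_val k g v)"
proof -
  have "lin_form k (snd g) (\<lambda>i. \<Sum>v\<in>F. u v * v i) = (\<Sum>v\<in>F. u v * lin_form k (snd g) v)"
    unfolding lin_form_def by (simp add: sum_distrib_left sum.swap[of _ F] algebra_simps)
  moreover have "fst g = (\<Sum>v\<in>F. u v * fst g)" using assms by (simp flip: sum_distrib_right)
  ultimately show ?thesis by (simp add: aff_val_def algebra_simps sum.distrib)
qed

lemma lin_form_scale: "lin_form k c (\<lambda>i. s * x i) = s * lin_form k c x"
  by (simp add: lin_form_def sum_distrib_left algebra_simps)

lemma lin_form_add: "lin_form k c (\<lambda>i. x i + z i) = lin_form k c x + lin_form k c z"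
  by (simp add: lin_form_def algebra_simps sum.distrib)

lemma aff_val_update:
  "i < k \<Longrightarrow> aff_val k g (x(i := x i + t)) = aff_val k g x + t * snd g i"
proof -
  assume "i < k"
  have "lin_form k (snd g) (x(i := x i + t)) =
      (\<Sum>m<k. snd g m * x m + (if m = i then t * snd g i else 0))"
    unfolding lin_form_def by (intro sum.cong) (auto simp: algebra_simps)
  also have "\<dots> = lin_form k (snd g) x + t * snd g i"
    using \<open>i < k\<close> by (simp add: lin_form_def sum.distrib)
  finally show ?thesis by (simp add: aff_val_def)
qed

lemma coord_space_update: "x \<in> coord_space k \<Longrightarrow> i < k \<Longrightarrow> x(i := v) \<in> coord_space k"
  by (simp add: coord_space_def)

lemma coord_space_scale: "x \<in> coord_space k \<Longrightarrow> (\<lambda>i. s * x i) \<in> coord_space k"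
  by (simp add: coord_space_def)

lemma continuous_on_coordinate [continuous_intros]: "continuous_on S (\<lambda>x. x i)"
  by (rule continuous_on_subset[OF continuous_on_product_coordinates]) simp

lemma continuous_on_lin_form [continuous_intros]: "continuous_on S (lin_form k c)"
  unfolding lin_form_def by (intro continuous_intros)

lemma continuous_on_aff_val [continuous_intros]: "continuous_on S (aff_val k g)"
  unfolding aff_val_def[abs_def] by (intro continuous_intros)

lemma open_positive_forms: "finite G \<Longrightarrow> open {x. \<forall>g\<in>G. 0 < aff_val k g x}"
proof -
  assume "finite G"
  have "{x. \<forall>g\<in>G. 0 < aff_val k g x} = (\<Inter>g\<in>G. {x. 0 < aff_val k g x})" by auto
  moreover have "open {x. 0 < aff_val k g x}" for g
    by (rule open_Collect_less) (auto intro: continuous_on_aff_val)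
  ultimately show ?thesis using \<open>finite G\<close> by auto
qed

lemma open_update_coordinate:
  fixes x :: "'a \<Rightarrow> real"
  assumes "open W" "x \<in> W"
  obtains e where "e > 0" "\<And>t. \<bar>t\<bar> < e \<Longrightarrow> x(i := x i + t) \<in> W"
proof -
  have "continuous_on UNIV (\<lambda>t. x(i := x i + t))"
  proof (intro continuous_on_coordinatewise_then_product)
    fix j show "continuous_on UNIV (\<lambda>t. (x(i := x i + t)) j)"
      by (cases "j = i") (auto intro!: continuous_intros)
  qed
  then have "open ((\<lambda>t. x(i := x i + t)) -` W)" by (rule open_vimage[OF assms(1)])
  moreover have "0 \<in> (\<lambda>t. x(i := x i + t)) -` W" using assms(2) by simp
  ultimately obtain e where "e > 0" "ball 0 e \<subseteq> (\<lambda>t. x(i := x i + t)) -` W"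
    by (meson openE)
  then show ?thesis by (intro that) (auto simp: dist_real_def)
qed

lemma mem_closed_polyhedron_if_nonconst_pos:
  assumes "x0 \<in> closed_polyhedron k G" "x \<in> coord_space k"
    and "\<And>g. g \<in> G \<Longrightarrow> nonconst_form k g \<Longrightarrow> 0 < aff_val k g x"
  shows "x \<in> closed_polyhedron k G"
proof -
  have "0 \<le> aff_val k g x" if g: "g \<in> G" for g
  proof (cases "nonconst_form k g")
    case True
    then show ?thesis using assms(3)[OF g] by simp
  next
    case False
    then have "aff_val k g x = aff_val k g x0" by (simp add: aff_val_if_not_nonconst)
    then show ?thesis using assms(1) g by (simp add: closed_polyhedron_def)
  qed
  then show ?thesis using assms(2) by (simp add: closed_polyhedron_def)
qed

lemma interior_of_closed_polyhedron:
  assumes "finite G"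
  shows "top_of_set (coord_space k) interior_of closed_polyhedron k G =
         {x \<in> closed_polyhedron k G. \<forall>g\<in>G. nonconst_form k g \<longrightarrow> 0 < aff_val k g x}"
proof (intro set_eqI iffI)
  fix x assume "x \<in> top_of_set (coord_space k) interior_of closed_polyhedron k G"
  then obtain W where W: "open W" "x \<in> coord_space k \<inter> W"
      "coord_space k \<inter> W \<subseteq> closed_polyhedron k G"
    unfolding interior_of_def openin_open by auto
  then have xQ: "x \<in> closed_polyhedron k G" by blast
  have "0 < aff_val k g x" if g: "g \<in> G" "nonconst_form k g" for g
  proof (rule ccontr)
    assume "\<not> 0 < aff_val k g x"
    then have zero: "aff_val k g x = 0" using xQ g by (force simp: closed_polyhedron_def)
    obtain i where i: "i < k" "snd g i \<noteq> 0" using g by (auto simp: nonconst_form_def)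
    obtain e where e: "e > 0" "\<And>t. \<bar>t\<bar> < e \<Longrightarrow> x(i := x i + t) \<in> W"
      using open_update_coordinate[OF W(1)] W(2) by blast
    define t where "t = - e / 2 * sgn (snd g i)"
    have "\<bar>t\<bar> < e" using e(1) i(2) by (simp add: t_def abs_mult abs_sgn_eq)
    moreover have "x(i := x i + t) \<in> coord_space k"
      using xQ i(1) by (simp add: closed_polyhedron_def coord_space_update)
    ultimately have "x(i := x i + t) \<in> closed_polyhedron k G"
      using W(3) e(2) by blast
    then have "0 \<le> aff_val k g x + t * snd g i"
      using g(1) i(1) by (auto simp: closed_polyhedron_def aff_val_update)
    moreover have "t * snd g i < 0"
      using e(1) i(2) by (simp add: t_def mult.assoc sgn_if)
    ultimately show False using zero by simp
  qed
  then show "x \<in> {x \<in> closed_polyhedron k G. \<forall>g\<in>G. nonconst_form k g \<longrightarrow> 0 < aff_val k g x}"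
    using xQ by blast
next
  fix x assume x: "x \<in> {x \<in> closed_polyhedron k G. \<forall>g\<in>G. nonconst_form k g \<longrightarrow> 0 < aff_val k g x}"
  define T where "T = coord_space k \<inter> {x. \<forall>g\<in>{g\<in>G. nonconst_form k g}. 0 < aff_val k g x}"
  have "openin (top_of_set (coord_space k)) T"
    unfolding T_def using assms by (intro openin_open_Int open_positive_forms) simp
  moreover have "x \<in> T" using x by (auto simp: T_def closed_polyhedron_def)
  moreover have "T \<subseteq> closed_polyhedron k G"
    using x by (auto simp: T_def intro: mem_closed_polyhedron_if_nonconst_pos)
  ultimately show "x \<in> top_of_set (coord_space k) interior_of closed_polyhedron k G"
    unfolding interior_of_def by blast
qed

lemma affine_comb_mem_affine_span_fun:
  fixes q :: "'i \<Rightarrow> 'p \<Rightarrow> real"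
  assumes "finite I" "I \<noteq> {}" "q ` I \<subseteq> S" "sum w I = 1"
  shows "(\<lambda>p. \<Sum>m\<in>I. w m * q m p) \<in> affine_span_fun S"
proof -
  define u where "u v = (\<Sum>m\<in>{m\<in>I. q m = v}. w m)" for v
  have "sum u (q ` I) = 1"
    using sum.image_gen[OF assms(1), of w q] assms(4) by (simp add: u_def)
  moreover have "(\<Sum>m\<in>I. w m * q m p) = (\<Sum>v\<in>q ` I. u v * v p)" for p
  proof -
    have "(\<Sum>m\<in>{m\<in>I. q m = v}. w m * q m p) = u v * v p" for v
      by (simp add: u_def sum_distrib_right)
    then show ?thesis using sum.image_gen[OF assms(1), of "\<lambda>m. w m * q m p" q] by simp
  qed
  ultimately show ?thesis
    unfolding affine_span_fun_def using assms(1-3)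
    by (intro CollectI exI[of _ "q ` I"] exI[of _ u]) auto
qed

definition preserves_affine_combs :: "(('a \<Rightarrow> real) \<Rightarrow> 'b \<Rightarrow> real) \<Rightarrow> bool" where
  "preserves_affine_combs f \<longleftrightarrow>
     (\<forall>F u. finite F \<longrightarrow> sum u F = 1 \<longrightarrow> f (\<lambda>i. \<Sum>v\<in>F. u v * v i) = (\<lambda>p. \<Sum>v\<in>F. u v * f v p))"

lemma affine_span_fun_image:
  assumes f: "preserves_affine_combs f"
  shows "affine_span_fun (f ` S) = f ` affine_span_fun S"
proof
  show "affine_span_fun (f ` S) \<subseteq> f ` affine_span_fun S"
  proof
    fix z assume "z \<in> affine_span_fun (f ` S)"
    then obtain F' u where F': "finite F'" "F' \<noteq> {}" "F' \<subseteq> f ` S" "sum u F' = 1"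
      and z: "z = (\<lambda>p. \<Sum>w\<in>F'. u w * w p)"
      unfolding affine_span_fun_def by blast
    define g where "g = inv_into S f"
    have fg: "f (g w) = w" if "w \<in> F'" for w
      using F'(3) that by (auto simp: g_def f_inv_into_f)
    have inj: "inj_on g F'" by (rule inj_on_inverseI[where g = f]) (rule fg)
    define F where "F = g ` F'"
    have reindex: "(\<Sum>v\<in>F. h v) = (\<Sum>w\<in>F'. h (g w))" for h :: "('a \<Rightarrow> real) \<Rightarrow> real"
      unfolding F_def by (rule sum.reindex[OF inj, unfolded comp_def])
    have "sum (\<lambda>v. u (f v)) F = 1" using F'(4) fg by (simp add: reindex)
    then have F: "finite F" "F \<noteq> {}" "F \<subseteq> S" "sum (\<lambda>v. u (f v)) F = 1"
      using F'(1-3) by (auto simp: F_def g_def inv_into_into)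
    have "z = (\<lambda>p. \<Sum>v\<in>F. u (f v) * f v p)"
      unfolding z reindex using fg by simp
    also have "\<dots> = f (\<lambda>i. \<Sum>v\<in>F. u (f v) * v i)"
      using f F(1,4) unfolding preserves_affine_combs_def by simp
    finally show "z \<in> f ` affine_span_fun S"
      unfolding affine_span_fun_def using F by blast
  qed
next
  show "f ` affine_span_fun S \<subseteq> affine_span_fun (f ` S)"
  proof
    fix z assume "z \<in> f ` affine_span_fun S"
    then obtain F u where F: "finite F" "F \<noteq> {}" "F \<subseteq> S" "sum u F = 1"
      and z: "z = f (\<lambda>p. \<Sum>v\<in>F. u v * v p)"
      unfolding affine_span_fun_def by blast
    have "z = (\<lambda>p. \<Sum>v\<in>F. u v * f v p)"
      using f F(1,4) unfolding z preserves_affine_combs_def by simp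
    then show "z \<in> affine_span_fun (f ` S)"
      using affine_comb_mem_affine_span_fun[OF F(1,2) _ F(4), of f "f ` S"] F(3) by auto
  qed
qed

lemma affine_span_fun_open_subset_coord_space:
  assumes W: "open W" and x0: "x0 \<in> coord_space k \<inter> W"
  shows "affine_span_fun (coord_space k \<inter> W) = coord_space k"
proof
  show "affine_span_fun (coord_space k \<inter> W) \<subseteq> coord_space k"
    unfolding affine_span_fun_def coord_space_def by (auto intro!: sum.neutral)
next
  show "coord_space k \<subseteq> affine_span_fun (coord_space k \<inter> W)"
  proof
    fix x assume x: "x \<in> coord_space k"
    \<comment> \<open>\<open>x\<close> is an affine combination of \<open>x0\<close> and of the points \<open>q m\<close> obtained by moving \<open>x0\<close>
      a little along the \<open>m\<close>-th axis, which stay in \<open>W\<close>.\<close>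
    have "\<exists>e>0. \<forall>t. \<bar>t\<bar> < e \<longrightarrow> x0(m := x0 m + t) \<in> W" for m
      using open_update_coordinate[OF W, of x0 m] x0 by (metis IntD2)
    then obtain e where e: "\<And>m. e m > 0" "\<And>m t. \<bar>t\<bar> < e m \<Longrightarrow> x0(m := x0 m + t) \<in> W"
      by metis
    define d where "d m = e m / 2" for m
    define c where "c m = (x m - x0 m) / d m" for m
    define q where "q m = (if m < k then x0(m := x0 m + d m) else x0)" for m
    define w where "w m = (if m < k then c m else 1 - (\<Sum>m<k. c m))" for m
    have d: "d m \<noteq> 0" "\<bar>d m\<bar> < e m" for m using e(1)[of m] by (auto simp: d_def)
    have "q ` {..<Suc k} \<subseteq> coord_space k \<inter> W"
      using x0 e(2) d by (auto simp: q_def coord_space_update)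
    moreover have "sum w {..<Suc k} = 1" by (simp add: w_def)
    moreover have "x = (\<lambda>i. \<Sum>m<Suc k. w m * q m i)"
    proof
      fix i
      have "(\<Sum>m<Suc k. w m * q m i) =
          (\<Sum>m<k. c m * x0 i + (if m = i then c m * d m else 0)) + w k * x0 i"
        by (auto simp: w_def q_def algebra_simps intro!: sum.cong)
      also have "\<dots> = (\<Sum>m<k. c m) * x0 i + (if i < k then x i - x0 i else 0) + w k * x0 i"
        using d(1) by (simp add: sum.distrib sum_distrib_right c_def)
      also have "\<dots> = x0 i + (if i < k then x i - x0 i else 0)"
        by (simp add: w_def algebra_simps)
      also have "\<dots> = x i" using x x0 by (auto simp: coord_space_def)
      finally show "x i = (\<Sum>m<Suc k. w m * q m i)" by simp
    qed
    ultimately show "x \<in> affine_span_fun (coord_space k \<inter> W)"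
      using affine_comb_mem_affine_span_fun[of "{..<Suc k}" q "coord_space k \<inter> W" w] by auto
  qed
qed

section \<open>Bounded open polyhedra are open balls\<close>

lemma le_mult_if_scaled_bound:
  fixes N m R :: real
  assumes scaled: "\<And>t. 0 \<le> t \<Longrightarrow> t * m < 1 \<Longrightarrow> t * N \<le> R" and "0 \<le> m" "0 \<le> N"
  shows "N \<le> R * m"
proof -
  have R: "0 \<le> R" using scaled[of 0] by simp
  consider "N = 0" | "0 < N" "m = 0" | "0 < N" "0 < m" using assms(2,3) by linarith
  then show ?thesis
  proof cases
    case 1
    then show ?thesis using R \<open>0 \<le> m\<close> by simp
  next
    case 2
    then have "(R + 1) / N * N \<le> R" using R by (intro scaled) auto
    then show ?thesis using 2 by simp
  next
    case 3
    have "1 / m \<le> R / N"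
    proof (rule dense_le_bounded[of 0])
      fix w :: real assume "0 < w" "w < 1 / m"
      then have "w * N \<le> R" using 3 by (intro scaled) (auto simp: field_simps)
      then show "w \<le> R / N" using 3 by (simp add: field_simps)
    qed (use 3 in simp)
    then show ?thesis using 3 by (simp add: field_simps)
  qed
qed

definition pos_homogeneous :: "(('a \<Rightarrow> real) \<Rightarrow> real) \<Rightarrow> bool" where
  "pos_homogeneous p \<longleftrightarrow> (\<forall>x s. 0 \<le> s \<longrightarrow> p (\<lambda>i. s * x i) = s * p x)"

definition radial_rescale :: "(('a \<Rightarrow> real) \<Rightarrow> real) \<Rightarrow> (('a \<Rightarrow> real) \<Rightarrow> real) \<Rightarrow> ('a \<Rightarrow> real) \<Rightarrow> 'a \<Rightarrow> real"
  where "radial_rescale p q x = (\<lambda>i. p x / q x * x i)"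

lemma continuous_on_radial_rescale:
  fixes p q :: "('a \<Rightarrow> real) \<Rightarrow> real"
  assumes cont: "continuous_on UNIV p" "continuous_on UNIV q"
    and zero: "\<And>x. x \<in> S \<Longrightarrow> q x = 0 \<Longrightarrow> x = (\<lambda>_. 0)"
    and bound: "\<And>x. x \<in> S \<Longrightarrow> \<bar>p x / q x\<bar> \<le> C"
  shows "continuous_on S (radial_rescale p q)"
  unfolding radial_rescale_def
proof (rule continuous_on_coordinatewise_then_product)
  fix i
  have lim: "(f \<longlongrightarrow> f x) (at x within S)"
    if "continuous_on UNIV f" for f :: "('a \<Rightarrow> real) \<Rightarrow> real" and x
    using that by (meson UNIV_I continuous_on_def subset_UNIV tendsto_within_subset)
  show "continuous_on S (\<lambda>x. p x / q x * x i)"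
    unfolding continuous_on_def
  proof
    fix x assume x: "x \<in> S"
    show "((\<lambda>x. p x / q x * x i) \<longlongrightarrow> p x / q x * x i) (at x within S)"
    proof (cases "q x = 0")
      case False
      then show ?thesis
        by (intro tendsto_intros lim cont continuous_on_product_coordinates)
    next
      case True
      then have x0: "x = (\<lambda>_. 0)" using zero x by blast
      have "((\<lambda>z. p z / q z * z i) \<longlongrightarrow> 0) (at x within S)"
      proof (rule Lim_null_comparison)
        have "norm (p z / q z * z i) \<le> C * \<bar>z i\<bar>" if "z \<in> S" for z
          unfolding real_norm_def abs_mult by (rule mult_right_mono[OF bound[OF that]]) simp
        then show "\<forall>\<^sub>F z in at x within S. norm (p z / q z * z i) \<le> C * \<bar>z i\<bar>"
          unfolding eventually_at_filter by (intro always_eventually) blast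
        have "((\<lambda>z. C * \<bar>z i\<bar>) \<longlongrightarrow> C * \<bar>x i\<bar>) (at x within S)"
          by (intro tendsto_intros lim continuous_on_product_coordinates)
        then show "((\<lambda>z. C * \<bar>z i\<bar>) \<longlongrightarrow> 0) (at x within S)" using x0 by simp
      qed
      then show ?thesis using x0 by simp
    qed
  qed
qed

lemma radial_rescale_inverse:
  fixes p q :: "('a \<Rightarrow> real) \<Rightarrow> real"
  assumes "pos_homogeneous p" "pos_homogeneous q"
    and pos: "x \<noteq> (\<lambda>_. 0) \<Longrightarrow> 0 < p x \<and> 0 < q x"
  shows "q (radial_rescale p q x) = p x" and "radial_rescale q p (radial_rescale p q x) = x"
proof -
  have hom: "p (\<lambda>i. s * x i) = s * p x" "q (\<lambda>i. s * x i) = s * q x" if "0 \<le> s" for s x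
    using assms(1,2) that unfolding pos_homogeneous_def by blast+
  define y where "y = radial_rescale p q x"
  have zero: "p (\<lambda>_. 0) = 0" "q (\<lambda>_. 0) = 0" using hom[of 0] by simp_all
  have "q y = p x \<and> radial_rescale q p y = x"
  proof (cases "x = (\<lambda>_. 0)")
    case True
    then show ?thesis using zero by (simp add: y_def radial_rescale_def)
  next
    case False
    then have "0 < p x" "0 < q x" using pos by auto
    moreover have "q y = p x / q x * q x" "p y = p x / q x * p x"
      unfolding y_def radial_rescale_def using calculation by (intro hom; simp)+
    ultimately show ?thesis by (auto simp: y_def radial_rescale_def field_simps)
  qed
  then show "q (radial_rescale p q x) = p x" and "radial_rescale q p (radial_rescale p q x) = x"
    unfolding y_def by blast+
qed

lemma abs_divide_le_max_if_le_mult: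
  fixes f h M :: real
  assumes "0 \<le> f" "0 \<le> h" "f \<le> M * h"
  shows "\<bar>f / h\<bar> \<le> max 0 M"
proof (cases "h = 0")
  case False
  then have "f / h \<le> M" using assms by (simp add: pos_divide_le_eq)
  then show ?thesis using assms(1,2) by simp
qed simp

lemma sublevel_sets_homeomorphic:
  fixes p q :: "('a \<Rightarrow> real) \<Rightarrow> real"
  assumes cone: "\<And>x s. x \<in> S \<Longrightarrow> 0 \<le> s \<Longrightarrow> (\<lambda>i. s * x i) \<in> S"
    and cont: "continuous_on UNIV p" "continuous_on UNIV q"
    and hom: "pos_homogeneous p" "pos_homogeneous q"
    and pos: "\<And>x. x \<in> S \<Longrightarrow> x \<noteq> (\<lambda>_. 0) \<Longrightarrow> 0 < p x \<and> 0 < q x"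
    and bound: "\<And>x. x \<in> S \<Longrightarrow> p x \<le> C * q x" "\<And>x. x \<in> S \<Longrightarrow> q x \<le> D * p x"
  shows "{x \<in> S. p x < 1} homeomorphic {x \<in> S. q x < 1}"
proof -
  have "p (\<lambda>i. 0 * x i) = 0 * p x" "q (\<lambda>i. 0 * x i) = 0 * q x" for x
    using hom unfolding pos_homogeneous_def by blast+
  then have "p (\<lambda>_. 0) = 0" "q (\<lambda>_. 0) = 0" by simp_all
  then have nonneg: "0 \<le> p x \<and> 0 \<le> q x" if "x \<in> S" for x
    using pos[OF that] by (cases "x = (\<lambda>_. 0)") auto
  have zero: "x = (\<lambda>_. 0)" if "x \<in> S" "p x = 0 \<or> q x = 0" for x
    using pos[OF that(1)] that(2) by (cases "x = (\<lambda>_. 0)") auto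
  have inverse: "q (radial_rescale p q x) = p x" "radial_rescale q p (radial_rescale p q x) = x"
    "p (radial_rescale q p x) = q x" "radial_rescale p q (radial_rescale q p x) = x"
    if "x \<in> S" for x
  proof -
    have "x \<noteq> (\<lambda>_. 0) \<Longrightarrow> 0 < p x \<and> 0 < q x" "x \<noteq> (\<lambda>_. 0) \<Longrightarrow> 0 < q x \<and> 0 < p x"
      using pos[OF that] by auto
    then show "q (radial_rescale p q x) = p x" "radial_rescale q p (radial_rescale p q x) = x"
      "p (radial_rescale q p x) = q x" "radial_rescale p q (radial_rescale q p x) = x"
      using radial_rescale_inverse[OF hom(1,2)] radial_rescale_inverse[OF hom(2,1)] by blast+
  qed
  have rescale: "radial_rescale p q x \<in> S" "radial_rescale q p x \<in> S" if "x \<in> S" for x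
    unfolding radial_rescale_def by (rule cone[OF that], use nonneg[OF that] in simp)+
  have "homeomorphism {x \<in> S. p x < 1} {x \<in> S. q x < 1} (radial_rescale p q) (radial_rescale q p)"
  proof (rule homeomorphismI)
    show "continuous_on {x \<in> S. p x < 1} (radial_rescale p q)"
    proof (rule continuous_on_radial_rescale[OF cont])
      fix x assume "x \<in> {x \<in> S. p x < 1}"
      then show "q x = 0 \<Longrightarrow> x = (\<lambda>_. 0)" and "\<bar>p x / q x\<bar> \<le> max 0 C"
        using zero nonneg bound(1) abs_divide_le_max_if_le_mult by blast+
    qed
    show "continuous_on {y \<in> S. q y < 1} (radial_rescale q p)"
    proof (rule continuous_on_radial_rescale[OF cont(2,1)])
      fix x assume "x \<in> {x \<in> S. q x < 1}"
      then show "p x = 0 \<Longrightarrow> x = (\<lambda>_. 0)" and "\<bar>q x / p x\<bar> \<le> max 0 D"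
        using zero nonneg bound(2) abs_divide_le_max_if_le_mult by blast+
    qed
    show "radial_rescale p q ` {x \<in> S. p x < 1} \<subseteq> {y \<in> S. q y < 1}"
      using inverse(1) rescale(1) by fastforce
    show "radial_rescale q p ` {y \<in> S. q y < 1} \<subseteq> {x \<in> S. p x < 1}"
      using inverse(3) rescale(2) by fastforce
    show "radial_rescale q p (radial_rescale p q x) = x" if "x \<in> {x \<in> S. p x < 1}" for x
      using inverse(2) that by blast
    show "radial_rescale p q (radial_rescale q p y) = y" if "y \<in> {y \<in> S. q y < 1}" for y
      using inverse(4) that by blast
  qed
  then show ?thesis unfolding homeomorphic_def by blast
qed

text \<open>For forms with positive constant terms, \<open>poly_gauge k gs\<close> is the Minkowski gauge of
  \<open>open_polyhedron k (set gs)\<close>.\<close>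

fun poly_gauge :: "nat \<Rightarrow> affine_form list \<Rightarrow> (nat \<Rightarrow> real) \<Rightarrow> real" where
  "poly_gauge k [] x = 0"
| "poly_gauge k (g # gs) x = max (- lin_form k (snd g) x / fst g) (poly_gauge k gs x)"

lemma poly_gauge_nonneg: "0 \<le> poly_gauge k gs x"
  by (induction gs) auto

lemma poly_gauge_scale: "0 \<le> s \<Longrightarrow> poly_gauge k gs (\<lambda>i. s * x i) = s * poly_gauge k gs x"
proof (induction gs)
  case (Cons g gs)
  have "- lin_form k (snd g) (\<lambda>i. s * x i) / fst g = s * (- lin_form k (snd g) x / fst g)"
    by (simp add: lin_form_scale)
  then show ?case
    by (simp only: poly_gauge.simps Cons.IH[OF Cons.prems] max_mult_distrib_left
        if_P[OF Cons.prems])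
qed simp

lemma poly_gauge_less_one_iff:
  "\<forall>g\<in>set gs. 0 < fst g \<Longrightarrow> poly_gauge k gs x < 1 \<longleftrightarrow> (\<forall>g\<in>set gs. 0 < aff_val k g x)"
proof (induction gs)
  case (Cons g gs)
  then have "- lin_form k (snd g) x / fst g < 1 \<longleftrightarrow> 0 < aff_val k g x"
    by (auto simp: aff_val_def field_simps)
  then show ?case using Cons by auto
qed simp

lemma continuous_on_poly_gauge: "continuous_on S (poly_gauge k gs)"
proof (induction gs)
  case (Cons g gs)
  have "continuous_on S (\<lambda>x. (- 1 / fst g) * lin_form k (snd g) x)"
    by (intro continuous_intros)
  then show ?case using Cons by (simp add: continuous_on_max)
qed simp

lemma abs_le_L2_set_lessThan: "(i::nat) < k \<Longrightarrow> \<bar>x i\<bar> \<le> L2_set x {..<k}"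
proof -
  assume "i < k"
  have "\<bar>x i\<bar> = sqrt ((x i)\<^sup>2)" by simp
  also have "\<dots> \<le> sqrt (\<Sum>j<k. (x j)\<^sup>2)"
    using \<open>i < k\<close> by (intro real_sqrt_le_mono member_le_sum[of i "{..<k}" "\<lambda>j. (x j)\<^sup>2"]) auto
  finally show ?thesis by (simp add: L2_set_def)
qed

lemma poly_gauge_le_L2_set: "\<exists>C. \<forall>x. poly_gauge k gs x \<le> C * L2_set x {..<k}"
proof (induction gs)
  case (Cons g gs)
  then obtain C where C: "\<And>x. poly_gauge k gs x \<le> C * L2_set x {..<k}" by blast
  define D where "D = (\<Sum>i<k. \<bar>snd g i\<bar>) / \<bar>fst g\<bar>"
  have D: "- lin_form k (snd g) x / fst g \<le> D * L2_set x {..<k}" for x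
  proof -
    have "\<bar>lin_form k (snd g) x\<bar> \<le> (\<Sum>i<k. \<bar>snd g i\<bar> * L2_set x {..<k})"
      unfolding lin_form_def
      by (rule order_trans[OF sum_abs sum_mono])
        (simp add: abs_mult abs_le_L2_set_lessThan mult_left_mono)
    then have "\<bar>lin_form k (snd g) x\<bar> / \<bar>fst g\<bar> \<le> D * L2_set x {..<k}"
      by (simp add: D_def divide_right_mono flip: sum_distrib_right)
    moreover have "- lin_form k (snd g) x / fst g \<le> \<bar>lin_form k (snd g) x\<bar> / \<bar>fst g\<bar>"
      by (metis abs_divide abs_ge_minus_self minus_divide_left)
    ultimately show ?thesis by linarith
  qed
  have "poly_gauge k (g # gs) x \<le> max D C * L2_set x {..<k}" for x
  proof -
    have "poly_gauge k (g # gs) x \<le> max (D * L2_set x {..<k}) (C * L2_set x {..<k})"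
      using max.mono[OF D[of x] C[of x]] by simp
    also have "\<dots> = max D C * L2_set x {..<k}" by (simp add: max_mult_distrib_right)
    finally show ?thesis .
  qed
  then show ?case by blast
qed (intro exI[of _ 0], simp)

lemma L2_set_le_poly_gauge:
  assumes pos: "\<forall>g\<in>set gs. 0 < fst g"
    and bounded: "\<And>x. x \<in> open_polyhedron k (set gs) \<Longrightarrow> L2_set x {..<k} \<le> R"
    and x: "x \<in> coord_space k"
  shows "L2_set x {..<k} \<le> R * poly_gauge k gs x"
proof (rule le_mult_if_scaled_bound)
  fix t :: real assume "0 \<le> t" "t * poly_gauge k gs x < 1"
  then have "poly_gauge k gs (\<lambda>i. t * x i) < 1" by (simp add: poly_gauge_scale)
  then have "(\<lambda>i. t * x i) \<in> open_polyhedron k (set gs)"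
    using x poly_gauge_less_one_iff[OF pos, of k "\<lambda>i. t * x i"]
    by (simp add: open_polyhedron_def coord_space_scale)
  then show "t * L2_set x {..<k} \<le> R"
    using bounded \<open>0 \<le> t\<close> by (simp add: L2_set_right_distrib)
qed (simp_all add: poly_gauge_nonneg)

lemma L2_set_coord_space_pos:
  assumes "x \<in> coord_space k" "x \<noteq> (\<lambda>_. 0)"
  shows "0 < L2_set x {..<k}"
proof -
  obtain i where i: "x i \<noteq> 0" using assms(2) by blast
  have "i < k"
  proof (rule ccontr)
    assume "\<not> i < k"
    then show False using assms(1) i by (simp add: coord_space_def)
  qed
  then have "L2_set x {..<k} \<noteq> 0" using i by (subst L2_set_eq_0_iff) auto
  then show ?thesis using L2_set_nonneg[of x "{..<k}"] by linarith
qed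

lemma open_ball_dim_eq: "open_ball_dim k = {x \<in> coord_space k. L2_set x {..<k} < 1}"
  unfolding open_ball_dim_def coord_space_def L2_set_def by auto

lemma centered_open_polyhedron_homeomorphic_ball:
  assumes pos: "\<forall>g\<in>set gs. 0 < fst g"
    and bounded: "\<And>x. x \<in> open_polyhedron k (set gs) \<Longrightarrow> L2_set x {..<k} \<le> R"
  shows "open_polyhedron k (set gs) homeomorphic open_ball_dim k"
proof -
  obtain C where C: "\<And>x. poly_gauge k gs x \<le> C * L2_set x {..<k}"
    using poly_gauge_le_L2_set by blast
  have gauge_pos: "0 < poly_gauge k gs x" if "x \<in> coord_space k" "x \<noteq> (\<lambda>_. 0)" for x
  proof -
    have "0 < R * poly_gauge k gs x"
      using L2_set_le_poly_gauge[OF pos bounded that(1)] L2_set_coord_space_pos[OF that] by linarith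
    then show ?thesis using poly_gauge_nonneg[of k gs x] by (cases "poly_gauge k gs x = 0") auto
  qed
  have "{x \<in> coord_space k. poly_gauge k gs x < 1} homeomorphic
      {x \<in> coord_space k. L2_set x {..<k} < 1}"
  proof (rule sublevel_sets_homeomorphic[where p = "poly_gauge k gs" and q = "\<lambda>x. L2_set x {..<k}"
        and C = C and D = R])
    show "continuous_on UNIV (\<lambda>x. L2_set x {..<k})"
      unfolding L2_set_def by (intro continuous_intros)
    show "pos_homogeneous (\<lambda>x. L2_set x {..<k})"
      by (simp add: pos_homogeneous_def L2_set_right_distrib)
    show "\<And>x. x \<in> coord_space k \<Longrightarrow> x \<noteq> (\<lambda>_. 0) \<Longrightarrow> 0 < poly_gauge k gs x \<and> 0 < L2_set x {..<k}"
      using gauge_pos L2_set_coord_space_pos by blast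
    show "\<And>x. x \<in> coord_space k \<Longrightarrow> L2_set x {..<k} \<le> R * poly_gauge k gs x"
      by (rule L2_set_le_poly_gauge[OF pos bounded])
    show "\<And>x s. x \<in> coord_space k \<Longrightarrow> 0 \<le> s \<Longrightarrow> (\<lambda>i. s * x i) \<in> coord_space k"
      by (rule coord_space_scale)
    show "continuous_on UNIV (poly_gauge k gs)" by (rule continuous_on_poly_gauge)
    show "pos_homogeneous (poly_gauge k gs)"
      by (simp add: pos_homogeneous_def poly_gauge_scale)
    show "\<And>x. x \<in> coord_space k \<Longrightarrow> poly_gauge k gs x \<le> C * L2_set x {..<k}"
      by (rule C)
  qed
  moreover have "open_polyhedron k (set gs) = {x \<in> coord_space k. poly_gauge k gs x < 1}"
    unfolding open_polyhedron_def using poly_gauge_less_one_iff[OF pos] by blast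
  ultimately show ?thesis unfolding open_ball_dim_eq by simp
qed

lemma open_polyhedron_homeomorphic_ball:
  assumes "finite G" and x0: "x0 \<in> open_polyhedron k G"
    and bounded: "\<And>x i. x \<in> open_polyhedron k G \<Longrightarrow> i < k \<Longrightarrow> \<bar>x i\<bar> \<le> B"
  shows "open_polyhedron k G homeomorphic open_ball_dim k"
proof -
  obtain gs where gs: "set gs = G" using finite_list[OF \<open>finite G\<close>] by blast
  define hs where "hs = map (\<lambda>g. (aff_val k g x0, snd g)) gs"
  have shift: "aff_val k (aff_val k (c, a) x0, a) z = aff_val k (c, a) (\<lambda>i. x0 i + z i)" for c a z
    by (simp add: aff_val_def lin_form_add)
  have shift': "aff_val k (aff_val k (c, a) x0, a) (\<lambda>i. x i - x0 i) = aff_val k (c, a) x" for c a x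
    using shift[of c a "\<lambda>i. x i - x0 i"] by simp
  have x0X: "x0 \<in> coord_space k" using x0 by (simp add: open_polyhedron_def)
  have hom: "homeomorphism (open_polyhedron k G) (open_polyhedron k (set hs))
               (\<lambda>x i. x i - x0 i) (\<lambda>z i. x0 i + z i)"
  proof (rule homeomorphismI)
    show "(\<lambda>x i. x i - x0 i) ` open_polyhedron k G \<subseteq> open_polyhedron k (set hs)"
      using x0X by (auto simp: open_polyhedron_def hs_def gs coord_space_def shift')
    show "(\<lambda>z i. x0 i + z i) ` open_polyhedron k (set hs) \<subseteq> open_polyhedron k G"
      using x0X by (auto simp: open_polyhedron_def hs_def gs coord_space_def shift)
    show "continuous_on (open_polyhedron k G) (\<lambda>x i. x i - x0 i)"
      by (intro continuous_intros)
    show "continuous_on (open_polyhedron k (set hs)) (\<lambda>z i. x0 i + z i)"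
      by (intro continuous_intros)
  qed auto
  have "open_polyhedron k (set hs) homeomorphic open_ball_dim k"
  proof (rule centered_open_polyhedron_homeomorphic_ball)
    show "\<forall>g\<in>set hs. 0 < fst g" using x0 by (auto simp: hs_def gs open_polyhedron_def)
    fix z assume z: "z \<in> open_polyhedron k (set hs)"
    then have "(\<lambda>i. x0 i + z i) \<in> open_polyhedron k G" using hom by (auto simp: homeomorphism_def)
    then have "\<bar>z i\<bar> \<le> 2 * B" if "i < k" for i
      using bounded[OF \<open>(\<lambda>i. x0 i + z i) \<in> open_polyhedron k G\<close> that] bounded[OF x0 that]
      by linarith
    then have "(\<Sum>i<k. \<bar>z i\<bar>) \<le> (\<Sum>i<k. 2 * B)" by (intro sum_mono) simp
    then show "L2_set z {..<k} \<le> (\<Sum>i<k. 2 * B)" using L2_set_le_sum_abs order_trans by blast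
  qed
  moreover have "open_polyhedron k G homeomorphic open_polyhedron k (set hs)"
    using hom unfolding homeomorphic_def by blast
  ultimately show ?thesis using homeomorphic_trans by blast
qed


section \<open>Enhanced Gelfand--Zetlin patterns\<close>

lemma all_ge_one_iff_all_Suc: "(\<forall>i\<ge>1. P i) \<longleftrightarrow> (\<forall>i. P (Suc i))"
  by (metis One_nat_def Suc_le_mono le0 not0_implies_Suc not_one_le_zero)

lemma gz_pos_parents: "gz_pos n (Suc i) j \<Longrightarrow> gz_pos n i j \<and> gz_pos n i (j + 1)"
  by (simp add: gz_pos_def)

lemma gz_connected_via_child:
  assumes "EL (Suc i) j" "ER (Suc i) j"
  shows "gz_connected EL ER (i, j) (i, j + 1)"
proof -
  have "gz_edge EL ER (i, j) (Suc i, j)"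
    unfolding gz_edge_def using assms by (intro exI[of _ "Suc i"] exI[of _ j]) simp
  moreover have "gz_edge EL ER (Suc i, j) (i, j + 1)"
    unfolding gz_edge_def using assms by (intro exI[of _ "Suc i"] exI[of _ j]) simp
  ultimately
  show ?thesis
    unfolding gz_connected_def by (meson rtranclp.rtrancl_into_rtrancl rtranclp.rtrancl_refl)
qed

lemma gz_connected_via_parent:
  assumes "ER (Suc i) j" "EL (Suc i) (j + 1)"
  shows "gz_connected EL ER (Suc i, j) (Suc i, j + 1)"
proof -
  have "gz_edge EL ER (Suc i, j) (i, j + 1)"
    unfolding gz_edge_def using assms by (intro exI[of _ "Suc i"] exI[of _ j]) simp
  moreover have "gz_edge EL ER (i, j + 1) (Suc i, j + 1)"
    unfolding gz_edge_def using assms by (intro exI[of _ "Suc i"] exI[of _ "j + 1"]) simp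
  ultimately show ?thesis
    unfolding gz_connected_def by (meson rtranclp.rtrancl_into_rtrancl rtranclp.rtrancl_refl)
qed

lemma mem_GZ_polytope_iff:
  "y \<in> GZ_polytope n lam \<longleftrightarrow> y \<in> gz_space n \<and>
     (\<forall>i j. gz_pos n (Suc i) j \<longrightarrow>
        yext n lam y i j \<le> y (Suc i, j) \<and> y (Suc i, j) \<le> yext n lam y i (j + 1))"
  unfolding GZ_polytope_def
  using all_ge_one_iff_all_Suc[of "\<lambda>i. \<forall>j. gz_pos n i j \<longrightarrow>
      yext n lam y (i - 1) j \<le> y (i, j) \<and> y (i, j) \<le> yext n lam y (i - 1) (j + 1)"]
  by auto

lemma GZ_polytope_entry_bound:
  assumes y: "y \<in> GZ_polytope n lam"
  shows "gz_pos n i j \<Longrightarrow> \<bar>yext n lam y i j\<bar> \<le> (\<Sum>m\<in>{1..n}. \<bar>real_of_int (lam m)\<bar>)"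
proof (induction i arbitrary: j)
  case 0
  then have "n + 1 - j \<in> {1..n}" by (auto simp: gz_pos_def)
  then show ?case
    by (simp add: yext_def member_le_sum[where f = "\<lambda>m. \<bar>real_of_int (lam m)\<bar>"])
next
  case (Suc i)
  then have "yext n lam y i j \<le> y (Suc i, j)" "y (Suc i, j) \<le> yext n lam y i (j + 1)"
    using y by (auto simp: mem_GZ_polytope_iff)
  moreover have "\<bar>yext n lam y i j\<bar> \<le> (\<Sum>m\<in>{1..n}. \<bar>real_of_int (lam m)\<bar>)"
    "\<bar>yext n lam y i (j + 1)\<bar> \<le> (\<Sum>m\<in>{1..n}. \<bar>real_of_int (lam m)\<bar>)"
    using Suc gz_pos_parents by blast+
  ultimately show ?case by (simp add: yext_def abs_le_iff)
qed

lemma of_int_le_diff_one_if_less: "(x::int) < y \<Longrightarrow> real_of_int x \<le> real_of_int y - 1"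
  by simp

lemma midpoint_strictly_between: "(l::real) < u \<Longrightarrow> l < (l + u) / 2 \<and> (l + u) / 2 < u"
  by simp

locale enhanced_GZ =
  fixes n :: nat and lam :: "nat \<Rightarrow> int" and a :: "nat \<Rightarrow> nat \<Rightarrow> int"
    and E EL ER :: "nat \<Rightarrow> nat \<Rightarrow> bool"
  assumes enhanced: "is_enhanced_GZ n lam a E EL ER"
begin

abbreviation rk :: nat where "rk \<equiv> gz_rank n E"

lemma top_row: "gz_pos n 0 j \<Longrightarrow> a 0 j = lam (n + 1 - j)"
proof -
  have "\<forall>j. 1 \<le> j \<and> j \<le> n \<longrightarrow> a 0 j = lam (n + 1 - j)"
    using enhanced unfolding is_enhanced_GZ_def is_GZ_pattern_def by (elim conjE) assumption
  then show "gz_pos n 0 j \<Longrightarrow> a 0 j = lam (n + 1 - j)" by (simp add: gz_pos_def)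
qed

lemma interlacing: "gz_pos n (Suc i) j \<Longrightarrow> a i j \<le> a (Suc i) j \<and> a (Suc i) j \<le> a i (j + 1)"
proof -
  have "\<forall>i j. 1 \<le> i \<and> gz_pos n i j \<longrightarrow> a (i - 1) j \<le> a i j \<and> a i j \<le> a (i - 1) (j + 1)"
    using enhanced unfolding is_enhanced_GZ_def is_GZ_pattern_def by (elim conjE) assumption
  then show "gz_pos n (Suc i) j \<Longrightarrow> ?thesis" by (metis diff_Suc_1 le_add1 plus_1_eq_Suc)
qed

lemma top_row_encircled: "gz_pos n 0 j \<Longrightarrow> E 0 j"
proof -
  have "\<forall>j. gz_pos n 0 j \<longrightarrow> E 0 j"
    using enhanced unfolding is_enhanced_GZ_def by (elim conjE) assumption
  then show "gz_pos n 0 j \<Longrightarrow> E 0 j" by simp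
qed

lemma joined_left: "EL (Suc i) j \<Longrightarrow> a (Suc i) j = a i j \<and> E (Suc i) j"
proof -
  have "\<forall>i j. EL i j \<longrightarrow> a i j = a (i - 1) j \<and> E i j"
    using enhanced unfolding is_enhanced_GZ_def by (elim conjE) assumption
  then show "EL (Suc i) j \<Longrightarrow> ?thesis" by simp
qed

lemma joined_right: "ER (Suc i) j \<Longrightarrow> a (Suc i) j = a i (j + 1) \<and> E (Suc i) j"
proof -
  have "\<forall>i j. ER i j \<longrightarrow> a i j = a (i - 1) (j + 1) \<and> E i j"
    using enhanced unfolding is_enhanced_GZ_def by (elim conjE) assumption
  then show "ER (Suc i) j \<Longrightarrow> ?thesis" by simp
qed

lemma joined_both_iff_below:
  "gz_pos n (Suc i) j \<Longrightarrow> gz_pos n (Suc i) (j + 1) \<Longrightarrow>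
     ER (Suc i) j \<and> EL (Suc i) (j + 1) \<longleftrightarrow> EL (Suc (Suc i)) j \<and> ER (Suc (Suc i)) j"
proof -
  have "\<forall>i j. 1 \<le> i \<and> gz_pos n i j \<and> gz_pos n i (j + 1) \<longrightarrow>
          (ER i j \<and> EL i (j + 1) \<longleftrightarrow> EL (i + 1) j \<and> ER (i + 1) j)"
    using enhanced unfolding is_enhanced_GZ_def by (elim conjE) assumption
  then show "gz_pos n (Suc i) j \<Longrightarrow> gz_pos n (Suc i) (j + 1) \<Longrightarrow> ?thesis" by simp
qed

lemma equal_top_entries_joined:
  "gz_pos n 0 j \<Longrightarrow> gz_pos n 0 (j + 1) \<Longrightarrow> a 0 j = a 0 (j + 1) \<Longrightarrow> EL 1 j \<and> ER 1 j"
proof -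
  have "\<forall>j. gz_pos n 0 j \<and> gz_pos n 0 (j + 1) \<and> a 0 j = a 0 (j + 1) \<longrightarrow> E 1 j \<and> EL 1 j \<and> ER 1 j"
    using enhanced unfolding is_enhanced_GZ_def by (elim conjE) assumption
  then show "gz_pos n 0 j \<Longrightarrow> gz_pos n 0 (j + 1) \<Longrightarrow> a 0 j = a 0 (j + 1) \<Longrightarrow> ?thesis" by simp
qed

lemma joined_left_if_eq_left:
  "gz_pos n (Suc i) j \<Longrightarrow> a i j < a i (j + 1) \<Longrightarrow> a (Suc i) j = a i j \<Longrightarrow> EL (Suc i) j"
proof -
  have "\<forall>i j. 1 \<le> i \<and> gz_pos n i j \<and> a (i - 1) j < a (i - 1) (j + 1) \<and> a i j = a (i - 1) j \<longrightarrow>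
          E i j \<and> EL i j"
    using enhanced unfolding is_enhanced_GZ_def by (elim conjE) assumption
  then show "gz_pos n (Suc i) j \<Longrightarrow> a i j < a i (j + 1) \<Longrightarrow> a (Suc i) j = a i j \<Longrightarrow> ?thesis" by simp
qed

lemma joined_right_if_encircled_eq_right:
  "gz_pos n (Suc i) j \<Longrightarrow> a i j < a i (j + 1) \<Longrightarrow> a (Suc i) j = a i (j + 1) \<Longrightarrow> E (Suc i) j \<Longrightarrow>
     ER (Suc i) j"
proof -
  have "\<forall>i j. 1 \<le> i \<and> gz_pos n i j \<and> a (i - 1) j < a (i - 1) (j + 1) \<and> a i j = a (i - 1) (j + 1) \<and>
          E i j \<longrightarrow> ER i j"
    using enhanced unfolding is_enhanced_GZ_def by (elim conjE) assumption
  then show "gz_pos n (Suc i) j \<Longrightarrow> a i j < a i (j + 1) \<Longrightarrow> a (Suc i) j = a i (j + 1) \<Longrightarrow>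
      E (Suc i) j \<Longrightarrow> ?thesis" by simp
qed

lemma joined_both_if_connected:
  "gz_pos n (Suc i) j \<Longrightarrow> a i j = a i (j + 1) \<Longrightarrow> a (Suc i) j = a i j \<Longrightarrow>
     gz_connected EL ER (i, j) (i, j + 1) \<Longrightarrow> EL (Suc i) j \<and> ER (Suc i) j"
proof -
  have "\<forall>i j. 1 \<le> i \<and> gz_pos n i j \<and> a (i - 1) j = a (i - 1) (j + 1) \<and> a i j = a (i - 1) j \<and>
          gz_connected EL ER (i - 1, j) (i - 1, j + 1) \<longrightarrow> E i j \<and> EL i j \<and> ER i j"
    using enhanced unfolding is_enhanced_GZ_def by (elim conjE) assumption
  then show "gz_pos n (Suc i) j \<Longrightarrow> a i j = a i (j + 1) \<Longrightarrow> a (Suc i) j = a i j \<Longrightarrow>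
      gz_connected EL ER (i, j) (i, j + 1) \<Longrightarrow> ?thesis" by simp
qed

lemma joined_if_encircled_eq:
  "gz_pos n (Suc i) j \<Longrightarrow> a i j = a i (j + 1) \<Longrightarrow> a (Suc i) j = a i j \<Longrightarrow> E (Suc i) j \<Longrightarrow>
     EL (Suc i) j \<or> ER (Suc i) j"
proof -
  have "\<forall>i j. 1 \<le> i \<and> gz_pos n i j \<and> a (i - 1) j = a (i - 1) (j + 1) \<and> a i j = a (i - 1) j \<and>
          E i j \<longrightarrow> EL i j \<or> ER i j"
    using enhanced unfolding is_enhanced_GZ_def by (elim conjE) assumption
  then show "gz_pos n (Suc i) j \<Longrightarrow> a i j = a i (j + 1) \<Longrightarrow> a (Suc i) j = a i j \<Longrightarrow>
      E (Suc i) j \<Longrightarrow> ?thesis" by simp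
qed

text \<open>Rule (3) moves a double edge up row by row; in row 1 it joins two equal entries of
  \<open>\<lambda>\<close>.\<close>

lemma parents_agree_if_joined_both:
  fixes F :: "nat \<Rightarrow> nat \<Rightarrow> 'b"
  assumes top: "\<And>j. F 0 j = B (lam (n + 1 - j))"
    and left: "\<And>i j. EL (Suc i) j \<Longrightarrow> F (Suc i) j = F i j"
    and right: "\<And>i j. \<not> EL (Suc i) j \<Longrightarrow> ER (Suc i) j \<Longrightarrow> F (Suc i) j = F i (j + 1)"
  shows "gz_pos n (Suc i) j \<Longrightarrow> EL (Suc i) j \<Longrightarrow> ER (Suc i) j \<Longrightarrow> F i j = F i (j + 1)"
proof (induction i arbitrary: j)
  case 0
  then have "a 0 j = a 0 (j + 1)" using joined_left[of 0 j] joined_right[of 0 j] by simp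
  then have "lam (n + 1 - j) = lam (n + 1 - (j + 1))"
    using top_row gz_pos_parents[OF "0.prems"(1)] by simp
  then show ?case by (simp add: top)
next
  case (Suc i)
  have pos: "gz_pos n (Suc i) j" "gz_pos n (Suc i) (j + 1)"
    using Suc.prems by (auto simp: gz_pos_def)
  then have R: "ER (Suc i) j" and L: "EL (Suc i) (j + 1)"
    using joined_both_iff_below Suc.prems(2,3) by blast+
  show ?case
  proof (cases "EL (Suc i) j")
    case True
    then show ?thesis using Suc.IH[OF pos(1) True R] left[OF True] left[OF L] by simp
  next
    case False
    then show ?thesis using right[OF False R] left[OF L] by simp
  qed
qed

text \<open>The strict bounds that \<open>cell_hat\<close> puts on a free entry \<open>(i + 1, j)\<close> whose parents have the
  values \<open>l\<close> and \<open>r\<close>.\<close>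

definition lower_bound :: "nat \<Rightarrow> nat \<Rightarrow> real \<Rightarrow> real" where
  "lower_bound i j l = (if 2 \<le> a (Suc i) j - a i j then of_int (a (Suc i) j) - 1 else l)"

definition upper_bound :: "nat \<Rightarrow> nat \<Rightarrow> real \<Rightarrow> real" where
  "upper_bound i j r = (if a i (j + 1) = a (Suc i) j then r else of_int (a (Suc i) j))"

text \<open>A free entry is put at the midpoint of a subinterval of the interval allowed by
  \<open>cell_hat\<close>, chosen so that every entry stays in \<open>(a i j - 1, a i j]\<close>; this invariant keeps
  the intervals of the next row nonempty.\<close>

fun witness :: "nat \<Rightarrow> nat \<Rightarrow> real" where
  "witness 0 j = of_int (lam (n + 1 - j))"
| "witness (Suc i) j =
     (if EL (Suc i) j then witness i j
      else if ER (Suc i) j then witness i (j + 1)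
      else if E (Suc i) j then of_int (a (Suc i) j)
      else (max (witness i j) (of_int (a (Suc i) j) - 1) +
            upper_bound i j (witness i (j + 1))) / 2)"

definition witness_inv :: "nat \<Rightarrow> bool" where
  "witness_inv i \<longleftrightarrow>
     (\<forall>j. gz_pos n i j \<longrightarrow> of_int (a i j) - 1 < witness i j \<and> witness i j \<le> of_int (a i j)) \<and>
     (\<forall>j. gz_pos n i j \<and> gz_pos n i (j + 1) \<and> a i j = a i (j + 1) \<longrightarrow>
        gz_connected EL ER (i, j) (i, j + 1) \<or> witness i j < witness i (j + 1))"

lemma witness_parents_agree:
  "gz_pos n (Suc i) j \<Longrightarrow> EL (Suc i) j \<Longrightarrow> ER (Suc i) j \<Longrightarrow> witness i j = witness i (j + 1)"
  by (rule parents_agree_if_joined_both[of witness real_of_int]) auto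

context
  fixes i j
  assumes inv: "witness_inv i" and pos: "gz_pos n (Suc i) j"
begin

lemma witness_parent_bounds:
  "of_int (a i j) - 1 < witness i j" "witness i j \<le> of_int (a i j)"
  "of_int (a i (j + 1)) - 1 < witness i (j + 1)" "witness i (j + 1) \<le> of_int (a i (j + 1))"
  using inv gz_pos_parents[OF pos] unfolding witness_inv_def by blast+

lemma witness_parents_less:
  assumes not_both: "\<not> (EL (Suc i) j \<and> ER (Suc i) j)"
  shows "witness i j < witness i (j + 1)"
proof (cases "a i j < a i (j + 1)")
  case True
  then show ?thesis using of_int_le_diff_one_if_less witness_parent_bounds by fastforce
next
  case False
  then have eq: "a i j = a i (j + 1)" "a (Suc i) j = a i j" using interlacing[OF pos] by auto
  then have "\<not> gz_connected EL ER (i, j) (i, j + 1)"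
    using joined_both_if_connected[OF pos] not_both by blast
  then show ?thesis using inv gz_pos_parents[OF pos] eq(1) unfolding witness_inv_def by blast
qed

lemma encircled_strictly_between:
  assumes "\<not> EL (Suc i) j" "\<not> ER (Suc i) j" "E (Suc i) j"
  shows "a i j < a (Suc i) j" "a (Suc i) j < a i (j + 1)"
proof -
  have ord: "a i j \<le> a (Suc i) j" "a (Suc i) j \<le> a i (j + 1)" using interlacing[OF pos] by auto
  show "a i j < a (Suc i) j"
  proof (rule ccontr)
    assume "\<not> a i j < a (Suc i) j"
    then have eq: "a (Suc i) j = a i j" using ord by simp
    show False
    proof (cases "a i j < a i (j + 1)")
      case True
      then show False using joined_left_if_eq_left[OF pos True eq] assms(1) by blast
    next
      case False
      then show False using joined_if_encircled_eq[OF pos _ eq assms(3)] ord eq assms(1,2) by simp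
    qed
  qed
  show "a (Suc i) j < a i (j + 1)"
  proof (rule ccontr)
    assume "\<not> a (Suc i) j < a i (j + 1)"
    then have eq: "a (Suc i) j = a i (j + 1)" using ord by simp
    show False
    proof (cases "a i j < a i (j + 1)")
      case True
      then show False
        using joined_right_if_encircled_eq_right[OF pos True eq assms(3)] assms(2) by blast
    next
      case False
      then show False using joined_if_encircled_eq[OF pos _ _ assms(3)] ord eq assms(1,2) by simp
    qed
  qed
qed

context
  assumes free: "\<not> EL (Suc i) j" "\<not> ER (Suc i) j" "\<not> E (Suc i) j"
begin

lemma witness_free_interval:
  "max (witness i j) (of_int (a (Suc i) j) - 1) < upper_bound i j (witness i (j + 1))"
  "upper_bound i j (witness i (j + 1)) \<le> of_int (a (Suc i) j)"
  "upper_bound i j (witness i (j + 1)) \<le> witness i (j + 1)"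
proof -
  have ord: "a i j \<le> a (Suc i) j" "a (Suc i) j \<le> a i (j + 1)" using interlacing[OF pos] by auto
  note bounds = witness_parent_bounds
  show "max (witness i j) (of_int (a (Suc i) j) - 1) < upper_bound i j (witness i (j + 1))"
  proof (cases "a i (j + 1) = a (Suc i) j")
    case True
    then show ?thesis using witness_parents_less free bounds by (simp add: upper_bound_def)
  next
    case False
    then have "a i j < a (Suc i) j" using joined_left_if_eq_left[OF pos] free ord by force
    then show ?thesis
      using of_int_le_diff_one_if_less bounds False by (fastforce simp: upper_bound_def)
  qed
  show "upper_bound i j (witness i (j + 1)) \<le> of_int (a (Suc i) j)"
    using bounds by (simp add: upper_bound_def)
  show "upper_bound i j (witness i (j + 1)) \<le> witness i (j + 1)"
    using bounds ord of_int_le_diff_one_if_less[of "a (Suc i) j" "a i (j + 1)"]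
    by (auto simp: upper_bound_def)
qed

lemma witness_free:
  "witness (Suc i) j =
     (max (witness i j) (of_int (a (Suc i) j) - 1) + upper_bound i j (witness i (j + 1))) / 2"
  using free by simp

lemma witness_free_bounds:
  "lower_bound i j (witness i j) < witness (Suc i) j \<and>
   witness (Suc i) j < upper_bound i j (witness i (j + 1))"
proof -
  have "lower_bound i j (witness i j) \<le> max (witness i j) (of_int (a (Suc i) j) - 1)"
    by (simp add: lower_bound_def)
  then show ?thesis using witness_free_interval(1) midpoint_strictly_between unfolding witness_free
    by fastforce
qed

end

lemma witness_Suc_bounds:
  "of_int (a (Suc i) j) - 1 < witness (Suc i) j \<and> witness (Suc i) j \<le> of_int (a (Suc i) j)"
proof -
  consider "EL (Suc i) j" | "\<not> EL (Suc i) j" "ER (Suc i) j"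
    | "\<not> EL (Suc i) j" "\<not> ER (Suc i) j" "E (Suc i) j"
    | "\<not> EL (Suc i) j" "\<not> ER (Suc i) j" "\<not> E (Suc i) j"
    by blast
  then show ?thesis
  proof cases
    case 4
    have "of_int (a (Suc i) j) - 1 \<le> max (witness i j) (of_int (a (Suc i) j) - 1)" by simp
    then show ?thesis
      using witness_free_interval[OF 4] midpoint_strictly_between unfolding witness_free[OF 4]
      by fastforce
  qed (use witness_parent_bounds joined_left[of i j] joined_right[of i j] in simp_all)
qed

lemma witness_Suc_between:
  "witness i j \<le> witness (Suc i) j \<and> witness (Suc i) j \<le> witness i (j + 1) \<and>
   (EL (Suc i) j \<or> witness i j < witness (Suc i) j) \<and>
   (ER (Suc i) j \<or> witness (Suc i) j < witness i (j + 1))"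
proof -
  consider "EL (Suc i) j" | "\<not> EL (Suc i) j" "ER (Suc i) j"
    | "\<not> EL (Suc i) j" "\<not> ER (Suc i) j" "E (Suc i) j"
    | "\<not> EL (Suc i) j" "\<not> ER (Suc i) j" "\<not> E (Suc i) j"
    by blast
  then show ?thesis
  proof cases
    case 1
    have "ER (Suc i) j \<and> witness i j = witness i (j + 1) \<or> witness i j < witness i (j + 1)"
      using witness_parents_less witness_parents_agree[OF pos 1] by blast
    then show ?thesis using 1 by auto
  next
    case 2
    then show ?thesis using witness_parents_less by simp
  next
    case 3
    then show ?thesis
      using encircled_strictly_between[OF 3] witness_parent_bounds
        of_int_le_diff_one_if_less[of "a i j" "a (Suc i) j"]
        of_int_le_diff_one_if_less[of "a (Suc i) j" "a i (j + 1)"]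
      by simp
  next
    case 4
    have "witness i j \<le> max (witness i j) (of_int (a (Suc i) j) - 1)" by simp
    then show ?thesis using witness_free_interval[OF 4] 4 unfolding witness_free[OF 4] by auto
  qed
qed

end

lemma witness_inv_0: "witness_inv 0"
  unfolding witness_inv_def
proof (intro conjI allI impI)
  fix j assume "gz_pos n 0 j"
  then show "of_int (a 0 j) - 1 < witness 0 j" "witness 0 j \<le> of_int (a 0 j)"
    using top_row by simp_all
next
  fix j assume "gz_pos n 0 j \<and> gz_pos n 0 (j + 1) \<and> a 0 j = a 0 (j + 1)"
  then have "EL (Suc 0) j" "ER (Suc 0) j" using equal_top_entries_joined by auto
  then show "gz_connected EL ER (0, j) (0, j + 1) \<or> witness 0 j < witness 0 (j + 1)"
    using gz_connected_via_child by blast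
qed

lemma witness_inv_Suc:
  assumes "witness_inv i"
  shows "witness_inv (Suc i)"
  unfolding witness_inv_def
proof (intro conjI allI impI)
  fix j assume "gz_pos n (Suc i) j"
  then show "of_int (a (Suc i) j) - 1 < witness (Suc i) j"
    and "witness (Suc i) j \<le> of_int (a (Suc i) j)"
    using witness_Suc_bounds[OF assms] by auto
next
  fix j
  assume pos: "gz_pos n (Suc i) j \<and> gz_pos n (Suc i) (j + 1) \<and> a (Suc i) j = a (Suc i) (j + 1)"
  have left: "ER (Suc i) j \<or> witness (Suc i) j < witness i (j + 1)"
      "witness (Suc i) j \<le> witness i (j + 1)"
    using witness_Suc_between[OF assms, of j] pos by auto
  have right: "EL (Suc i) (j + 1) \<or> witness i (j + 1) < witness (Suc i) (j + 1)"
      "witness i (j + 1) \<le> witness (Suc i) (j + 1)"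
    using witness_Suc_between[OF assms, of "j + 1"] pos by auto
  show "gz_connected EL ER (Suc i, j) (Suc i, j + 1) \<or> witness (Suc i) j < witness (Suc i) (j + 1)"
  proof (cases "ER (Suc i) j \<and> EL (Suc i) (j + 1)")
    case True
    then show ?thesis using gz_connected_via_parent by blast
  next
    case False
    then show ?thesis using left right by auto
  qed
qed

lemma witness_inv: "witness_inv i"
  by (induction i) (auto intro: witness_inv_0 witness_inv_Suc)

lemma witness_between:
  "gz_pos n (Suc i) j \<Longrightarrow>
     witness i j \<le> witness (Suc i) j \<and> witness (Suc i) j \<le> witness i (j + 1) \<and>
     (EL (Suc i) j \<or> witness i j < witness (Suc i) j) \<and>
   (ER (Suc i) j \<or> witness (Suc i) j < witness i (j + 1))"
  by (rule witness_Suc_between[OF witness_inv])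

definition free_pos :: "(nat \<times> nat) set" where
  "free_pos = {(i, j). gz_pos n i j \<and> \<not> E i j}"

lemma finite_free_pos: "finite free_pos"
  by (rule finite_subset[of _ "{0..n} \<times> {0..n}"]) (auto simp: free_pos_def gz_pos_def)

lemma free_pos_Suc: "p \<in> free_pos \<Longrightarrow> \<exists>i j. p = (Suc i, j)"
  using top_row_encircled by (cases p; case_tac "fst p") (auto simp: free_pos_def)

lemma free_pos_not_joined:
  assumes "(Suc i, j) \<in> free_pos"
  shows "\<not> EL (Suc i) j" "\<not> ER (Suc i) j" "\<not> E (Suc i) j"
  using assms joined_left joined_right by (auto simp: free_pos_def)

definition free_enum :: "nat \<Rightarrow> nat \<times> nat" where
  "free_enum = (SOME h. bij_betw h {..<rk} free_pos)"

definition free_index :: "nat \<times> nat \<Rightarrow> nat" where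
  "free_index = the_inv_into {..<rk} free_enum"

lemma bij_free_enum: "bij_betw free_enum {..<rk} free_pos"
proof -
  have "\<exists>h. bij_betw h {..<rk} free_pos"
    using ex_bij_betw_nat_finite[OF finite_free_pos]
    by (simp add: gz_rank_def free_pos_def atLeast0LessThan)
  then show ?thesis unfolding free_enum_def by (rule someI_ex)
qed

lemma free_enum_mem: "m < rk \<Longrightarrow> free_enum m \<in> free_pos"
  using bij_free_enum by (auto simp: bij_betw_def)

lemma free_index_enum: "m < rk \<Longrightarrow> free_index (free_enum m) = m"
  using bij_free_enum unfolding free_index_def bij_betw_def by (simp add: the_inv_into_f_f)

lemma free_index_mem: "p \<in> free_pos \<Longrightarrow> free_index p < rk \<and> free_enum (free_index p) = p"
  using bij_free_enum unfolding free_index_def bij_betw_def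
  by (metis f_the_inv_into_f lessThan_iff subset_refl the_inv_into_into)

text \<open>The free (non-encircled) entries serve as coordinates, the \<open>m\<close>-th one being the entry
  \<open>free_enum m\<close>; every other entry is copied along an edge or fixed.\<close>

fun entry_form :: "nat \<Rightarrow> nat \<Rightarrow> affine_form" where
  "entry_form 0 j = const_form (of_int (lam (n + 1 - j)))"
| "entry_form (Suc i) j =
     (if EL (Suc i) j then entry_form i j
      else if ER (Suc i) j then entry_form i (j + 1)
      else if E (Suc i) j then const_form (of_int (a (Suc i) j))
      else coord_form (free_index (Suc i, j)))"

lemma entry_form_parents_agree:
  "gz_pos n (Suc i) j \<Longrightarrow> EL (Suc i) j \<Longrightarrow> ER (Suc i) j \<Longrightarrow> entry_form i j = entry_form i (j + 1)"
  by (rule parents_agree_if_joined_both[of entry_form "\<lambda>c. const_form (of_int c)"]) auto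

lemma aff_val_entry_form_free:
  "(Suc i, j) \<in> free_pos \<Longrightarrow> aff_val rk (entry_form (Suc i) j) x = x (free_index (Suc i, j))"
  using free_pos_not_joined free_index_mem by (simp add: aff_val_coord_form)

definition lift :: "(nat \<Rightarrow> real) \<Rightarrow> nat \<times> nat \<Rightarrow> real" where
  "lift x p = (if p \<in> gz_coords n then aff_val rk (entry_form (fst p) (snd p)) x else 0)"

definition proj :: "(nat \<times> nat \<Rightarrow> real) \<Rightarrow> nat \<Rightarrow> real" where
  "proj y = (\<lambda>m. if m < rk then y (free_enum m) else 0)"

lemma yext_lift: "gz_pos n i j \<Longrightarrow> yext n lam (lift x) i j = aff_val rk (entry_form i j) x"
  by (cases i) (auto simp: yext_def lift_def gz_coords_def gz_pos_def)

lemma yext_Suc: "yext n lam y (Suc i) j = y (Suc i, j)"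
  by (simp add: yext_def)

lemma lift_Suc: "gz_pos n (Suc i) j \<Longrightarrow> lift x (Suc i, j) = aff_val rk (entry_form (Suc i) j) x"
  using yext_lift[of "Suc i" j x] by (simp add: yext_Suc)

lemma lift_in_gz_space: "lift x \<in> gz_space n"
  by (auto simp: gz_space_def lift_def)

lemma proj_in_coord_space: "proj y \<in> coord_space rk"
  by (simp add: proj_def coord_space_def)

lemma proj_lift: "x \<in> coord_space rk \<Longrightarrow> proj (lift x) = x"
proof
  fix m assume x: "x \<in> coord_space rk"
  show "proj (lift x) m = x m"
  proof (cases "m < rk")
    case True
    then obtain i j where p: "free_enum m = (Suc i, j)" using free_enum_mem free_pos_Suc by blast
    then have free: "(Suc i, j) \<in> free_pos" using free_enum_mem[OF True] by simp
    then have "lift x (Suc i, j) = x (free_index (Suc i, j))"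
      using yext_lift[of "Suc i" j x] aff_val_entry_form_free by (simp add: yext_Suc free_pos_def)
    then show ?thesis using True p free_index_enum[OF True] by (simp add: proj_def)
  next
    case False
    then show ?thesis using x by (simp add: proj_def coord_space_def)
  qed
qed

lemma homeomorphism_lift:
  "homeomorphism (coord_space rk) (lift ` coord_space rk) lift proj"
proof (rule homeomorphismI)
  show "continuous_on (coord_space rk) lift"
  proof (rule continuous_on_coordinatewise_then_product)
    fix p :: "nat \<times> nat"
    show "continuous_on (coord_space rk) (\<lambda>x. lift x p)"
      by (cases "p \<in> gz_coords n") (simp_all add: lift_def continuous_on_aff_val)
  qed
  show "continuous_on (lift ` coord_space rk) proj"
  proof (rule continuous_on_coordinatewise_then_product)
    fix m
    show "continuous_on (lift ` coord_space rk) (\<lambda>y. proj y m)"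
      by (cases "m < rk") (simp_all add: proj_def continuous_on_coordinate)
  qed
qed (auto simp: proj_lift proj_in_coord_space)

lemma preserves_affine_combs_lift: "preserves_affine_combs lift"
  unfolding preserves_affine_combs_def by (auto simp: lift_def aff_val_affine_comb)

definition entry_cond :: "(nat \<times> nat \<Rightarrow> real) \<Rightarrow> nat \<Rightarrow> nat \<Rightarrow> bool" where
  "entry_cond y i j \<longleftrightarrow>
     (EL (Suc i) j \<longrightarrow> y (Suc i, j) = yext n lam y i j) \<and>
     (ER (Suc i) j \<longrightarrow> y (Suc i, j) = yext n lam y i (j + 1)) \<and>
     (\<not> EL (Suc i) j \<and> \<not> ER (Suc i) j \<and> E (Suc i) j \<longrightarrow> y (Suc i, j) = of_int (a (Suc i) j)) \<and>
     (\<not> EL (Suc i) j \<and> \<not> ER (Suc i) j \<and> \<not> E (Suc i) j \<longrightarrow>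
        lower_bound i j (yext n lam y i j) < y (Suc i, j) \<and>
        y (Suc i, j) < upper_bound i j (yext n lam y i (j + 1)))"

lemma cell_hat_eq:
  "cell_hat n lam a E EL ER = {y \<in> gz_space n. \<forall>i j. gz_pos n (Suc i) j \<longrightarrow> entry_cond y i j}"
proof -
  have shift: "(\<forall>i j. 1 \<le> i \<and> gz_pos n i j \<longrightarrow> P i j) \<longleftrightarrow> (\<forall>i j. gz_pos n (Suc i) j \<longrightarrow> P (Suc i) j)"
    for P :: "nat \<Rightarrow> nat \<Rightarrow> bool"
    using all_ge_one_iff_all_Suc[of "\<lambda>i. \<forall>j. gz_pos n i j \<longrightarrow> P i j"] by auto
  have ifs: "(if c then A < x else B < x) \<longleftrightarrow> (if c then A else B) < x"
    "(if d then x < C else x < D) \<longleftrightarrow> x < (if d then C else D)" for c d and x A B C D :: real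
    by simp_all
  show ?thesis
    unfolding cell_hat_def shift diff_Suc_1 ifs entry_cond_def lower_bound_def upper_bound_def
    by (simp add: algebra_simps)
qed

definition lower_form :: "nat \<Rightarrow> nat \<Rightarrow> affine_form" where
  "lower_form i j = diff_form (entry_form (Suc i) j)
     (if 2 \<le> a (Suc i) j - a i j then const_form (of_int (a (Suc i) j) - 1) else entry_form i j)"

definition upper_form :: "nat \<Rightarrow> nat \<Rightarrow> affine_form" where
  "upper_form i j = diff_form
     (if a i (j + 1) = a (Suc i) j then entry_form i (j + 1) else const_form (of_int (a (Suc i) j)))
     (entry_form (Suc i) j)"

lemma aff_val_lower_form:
  "aff_val k (lower_form i j) x =
     aff_val k (entry_form (Suc i) j) x - lower_bound i j (aff_val k (entry_form i j) x)"
  by (simp add: lower_form_def lower_bound_def)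

lemma aff_val_upper_form:
  "aff_val k (upper_form i j) x =
     upper_bound i j (aff_val k (entry_form i (j + 1)) x) - aff_val k (entry_form (Suc i) j) x"
  by (simp add: upper_form_def upper_bound_def)

lemma entry_cond_lift_iff:
  assumes pos: "gz_pos n (Suc i) j"
  shows "entry_cond (lift x) i j \<longleftrightarrow>
    ((Suc i, j) \<in> free_pos \<longrightarrow> 0 < aff_val rk (lower_form i j) x \<and> 0 < aff_val rk (upper_form i j) x)"
proof -
  have parents: "gz_pos n i j" "gz_pos n i (j + 1)" using gz_pos_parents[OF pos] by auto
  show ?thesis
    using yext_lift[OF parents(1)] yext_lift[OF parents(2)] lift_Suc[OF pos]
      entry_form_parents_agree[OF pos] pos
      joined_left[of i j] joined_right[of i j]
    by (auto simp: entry_cond_def free_pos_def aff_val_lower_form aff_val_upper_form)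
qed

lemma eq_lift_proj:
  assumes y: "y \<in> gz_space n" and cond: "\<And>i j. gz_pos n (Suc i) j \<Longrightarrow> entry_cond y i j"
  shows "y = lift (proj y)"
proof -
  have entries: "gz_pos n i j \<Longrightarrow> yext n lam y i j = aff_val rk (entry_form i j) (proj y)" for i j
  proof (induction i arbitrary: j)
    case 0
    then show ?case by (simp add: yext_def)
  next
    case (Suc i)
    have parents: "gz_pos n i j" "gz_pos n i (j + 1)" using gz_pos_parents[OF Suc.prems] by auto
    have "(Suc i, j) \<in> free_pos \<Longrightarrow> y (Suc i, j) = proj y (free_index (Suc i, j))"
      using free_index_mem[of "(Suc i, j)"] by (simp add: proj_def)
    then show ?case
      using cond[OF Suc.prems] Suc.IH[OF parents(1)] Suc.IH[OF parents(2)] Suc.prems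
        aff_val_entry_form_free[of i j "proj y"]
      by (auto simp: entry_cond_def yext_Suc free_pos_def)
  qed
  show ?thesis
  proof
    fix p :: "nat \<times> nat"
    show "y p = lift (proj y) p"
    proof (cases "p \<in> gz_coords n")
      case True
      then obtain i j where p: "p = (Suc i, j)" and pos: "gz_pos n (Suc i) j"
        by (cases p; case_tac "fst p") (auto simp: gz_coords_def gz_pos_def)
      then show ?thesis using entries[OF pos] lift_Suc[OF pos] by (simp add: yext_Suc)
    next
      case False
      then have "y p = 0" using y unfolding gz_space_def by blast
      then show ?thesis using False by (simp add: lift_def)
    qed
  qed
qed

definition hat_forms :: "affine_form set" where
  "hat_forms = (\<Union>(i, j)\<in>{(i, j). (Suc i, j) \<in> free_pos}. {lower_form i j, upper_form i j})"

lemma finite_hat_forms: "finite hat_forms"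
proof -
  have "{(i, j). (Suc i, j) \<in> free_pos} \<subseteq> {0..n} \<times> {0..n}" by (auto simp: free_pos_def gz_pos_def)
  then have "finite {(i, j). (Suc i, j) \<in> free_pos}" by (rule finite_subset) simp
  then show ?thesis unfolding hat_forms_def by (rule finite_UN_I) (simp split: prod.split)
qed

lemma lift_in_cell_hat_iff:
  "lift x \<in> cell_hat n lam a E EL ER \<longleftrightarrow> (\<forall>g\<in>hat_forms. 0 < aff_val rk g x)"
proof -
  have "(\<forall>i j. gz_pos n (Suc i) j \<longrightarrow> entry_cond (lift x) i j) \<longleftrightarrow>
      (\<forall>i j. (Suc i, j) \<in> free_pos \<longrightarrow>
         0 < aff_val rk (lower_form i j) x \<and> 0 < aff_val rk (upper_form i j) x)"
    using entry_cond_lift_iff by (auto simp: free_pos_def)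
  also have "\<dots> \<longleftrightarrow> (\<forall>g\<in>hat_forms. 0 < aff_val rk g x)"
    unfolding hat_forms_def by blast
  finally show ?thesis using lift_in_gz_space by (simp add: cell_hat_eq)
qed

lemma cell_hat_eq_lift: "cell_hat n lam a E EL ER = lift ` open_polyhedron rk hat_forms"
proof
  show "cell_hat n lam a E EL ER \<subseteq> lift ` open_polyhedron rk hat_forms"
  proof
    fix y assume y: "y \<in> cell_hat n lam a E EL ER"
    then have eq: "y = lift (proj y)" by (intro eq_lift_proj) (auto simp: cell_hat_eq)
    have "lift (proj y) \<in> cell_hat n lam a E EL ER" using y by (simp only: eq[symmetric])
    then have "proj y \<in> open_polyhedron rk hat_forms"
      using lift_in_cell_hat_iff proj_in_coord_space by (simp add: open_polyhedron_def)
    then show "y \<in> lift ` open_polyhedron rk hat_forms" using eq by blast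
  qed
  show "lift ` open_polyhedron rk hat_forms \<subseteq> cell_hat n lam a E EL ER"
    using lift_in_cell_hat_iff by (auto simp: open_polyhedron_def)
qed

definition gz_forms :: "affine_form set" where
  "gz_forms = (\<Union>(i, j)\<in>{(i, j). gz_pos n (Suc i) j}.
     {diff_form (entry_form (Suc i) j) (entry_form i j),
      diff_form (entry_form i (j + 1)) (entry_form (Suc i) j)})"

lemma finite_gz_forms: "finite gz_forms"
proof -
  have "{(i, j). gz_pos n (Suc i) j} \<subseteq> {0..n} \<times> {0..n}" by (auto simp: gz_pos_def)
  then have "finite {(i, j). gz_pos n (Suc i) j}" by (rule finite_subset) simp
  then show ?thesis unfolding gz_forms_def by (rule finite_UN_I) (simp split: prod.split)
qed

lemma lift_in_GZ_polytope_iff: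
  "lift x \<in> GZ_polytope n lam \<longleftrightarrow> (\<forall>g\<in>gz_forms. 0 \<le> aff_val rk g x)"
proof -
  have "lift x \<in> GZ_polytope n lam \<longleftrightarrow> (\<forall>i j. gz_pos n (Suc i) j \<longrightarrow>
      aff_val rk (entry_form i j) x \<le> aff_val rk (entry_form (Suc i) j) x \<and>
      aff_val rk (entry_form (Suc i) j) x \<le> aff_val rk (entry_form i (j + 1)) x)"
    using lift_in_gz_space yext_lift lift_Suc gz_pos_parents by (auto simp: mem_GZ_polytope_iff)
  also have "\<dots> \<longleftrightarrow> (\<forall>g\<in>gz_forms. 0 \<le> aff_val rk g x)"
    unfolding gz_forms_def by auto
  finally show ?thesis .
qed

lemma GZ_polytope_Int_lift:
  "GZ_polytope n lam \<inter> lift ` coord_space rk = lift ` closed_polyhedron rk gz_forms"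
  by (auto simp: closed_polyhedron_def lift_in_GZ_polytope_iff)

definition cell_polyhedron :: "(nat \<Rightarrow> real) set" where
  "cell_polyhedron = open_polyhedron rk (hat_forms \<union> {g \<in> gz_forms. nonconst_form rk g})"

definition witness_coords :: "nat \<Rightarrow> real" where
  "witness_coords m = (if m < rk then witness (fst (free_enum m)) (snd (free_enum m)) else 0)"

lemma entry_form_joined_right:
  "gz_pos n (Suc i) j \<Longrightarrow> ER (Suc i) j \<Longrightarrow> entry_form (Suc i) j = entry_form i (j + 1)"
  using entry_form_parents_agree by auto

lemma aff_val_entry_form_witness:
  "gz_pos n i j \<Longrightarrow> aff_val rk (entry_form i j) witness_coords = witness i j"
proof (induction i arbitrary: j)
  case 0
  then show ?case by simp
next
  case (Suc i)
  have parents: "gz_pos n i j" "gz_pos n i (j + 1)" using gz_pos_parents[OF Suc.prems] by auto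
  show ?case
  proof (cases "(Suc i, j) \<in> free_pos")
    case True
    then show ?thesis
      using aff_val_entry_form_free free_index_mem free_pos_not_joined
      by (simp add: witness_coords_def)
  next
    case False
    then show ?thesis
      using Suc.IH[OF parents(1)] Suc.IH[OF parents(2)] Suc.prems by (auto simp: free_pos_def)
  qed
qed

lemma witness_coords_in_hat_polyhedron: "witness_coords \<in> open_polyhedron rk hat_forms"
proof -
  have "0 < aff_val rk (lower_form i j) witness_coords"
    "0 < aff_val rk (upper_form i j) witness_coords"
    if free: "(Suc i, j) \<in> free_pos" for i j
  proof -
    have pos: "gz_pos n (Suc i) j" using free by (simp add: free_pos_def)
    show "0 < aff_val rk (lower_form i j) witness_coords"
      "0 < aff_val rk (upper_form i j) witness_coords"
      using witness_free_bounds[OF witness_inv pos free_pos_not_joined[OF free]]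
        aff_val_entry_form_witness[OF pos] aff_val_entry_form_witness gz_pos_parents[OF pos]
      by (simp_all add: aff_val_lower_form aff_val_upper_form)
  qed
  then show ?thesis
    by (auto simp: open_polyhedron_def hat_forms_def coord_space_def witness_coords_def)
qed

lemma witness_coords_gz_forms:
  assumes "g \<in> gz_forms"
  shows "0 \<le> aff_val rk g witness_coords \<and>
    (nonconst_form rk g \<longrightarrow> 0 < aff_val rk g witness_coords)"
proof -
  obtain i j where pos: "gz_pos n (Suc i) j" and
    g: "g = diff_form (entry_form (Suc i) j) (entry_form i j) \<or>
        g = diff_form (entry_form i (j + 1)) (entry_form (Suc i) j)"
    using assms by (auto simp: gz_forms_def)
  have parents: "gz_pos n i j" "gz_pos n i (j + 1)" using gz_pos_parents[OF pos] by auto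
  note vals = aff_val_entry_form_witness[OF parents(1)] aff_val_entry_form_witness[OF parents(2)]
    aff_val_entry_form_witness[OF pos]
  have const: "\<not> nonconst_form rk (diff_form (entry_form (Suc i) j) (entry_form i j))"
    if "EL (Suc i) j"
    using that nonconst_form_diff_self by simp
  have const': "\<not> nonconst_form rk (diff_form (entry_form i (j + 1)) (entry_form (Suc i) j))"
    if "ER (Suc i) j"
    using that entry_form_joined_right[OF pos] nonconst_form_diff_self by simp
  show ?thesis
    using g witness_between[OF pos] vals const const' by (auto simp del: entry_form.simps)
qed

lemma witness_coords_in_gz_polyhedron: "witness_coords \<in> closed_polyhedron rk gz_forms"
  using witness_coords_gz_forms
  by (simp add: closed_polyhedron_def coord_space_def witness_coords_def)

lemma affine_span_cell_hat: "affine_span_fun (cell_hat n lam a E EL ER) = lift ` coord_space rk"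
proof -
  define W where "W = {x. \<forall>g\<in>hat_forms. 0 < aff_val rk g x}"
  have "open W" unfolding W_def using finite_hat_forms by (rule open_positive_forms)
  have P: "open_polyhedron rk hat_forms = coord_space rk \<inter> W"
    by (auto simp: open_polyhedron_def W_def)
  show ?thesis
    unfolding cell_hat_eq_lift affine_span_fun_image[OF preserves_affine_combs_lift] P
    using affine_span_fun_open_subset_coord_space[OF \<open>open W\<close>] witness_coords_in_hat_polyhedron P
    by simp
qed

lemma cell_eq_lift: "cell n lam a E EL ER = lift ` cell_polyhedron"
proof -
  let ?X = "coord_space rk"
  let ?Q = "closed_polyhedron rk gz_forms"
  let ?I = "{x \<in> ?Q. \<forall>g\<in>gz_forms. nonconst_form rk g \<longrightarrow> 0 < aff_val rk g x}"
  have "homeomorphic_maps (top_of_set ?X) (top_of_set (lift ` ?X)) lift proj"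
    using homeomorphism_lift unfolding homeomorphic_maps_def homeomorphism_def by auto
  then have "homeomorphic_map (top_of_set ?X) (top_of_set (lift ` ?X)) lift"
    using homeomorphic_map_maps by blast
  then have interior:
      "top_of_set (lift ` ?X) interior_of (GZ_polytope n lam \<inter> lift ` ?X) = lift ` ?I"
    unfolding GZ_polytope_Int_lift interior_of_closed_polyhedron[OF finite_gz_forms, symmetric]
    by (rule homeomorphic_map_interior_of) (auto simp: closed_polyhedron_def)
  have "inj_on lift ?X" using proj_lift by (metis inj_on_inverseI)
  then have "cell n lam a E EL ER = lift ` (open_polyhedron rk hat_forms \<inter> ?I)"
    unfolding cell_def Let_def affine_span_cell_hat interior unfolding cell_hat_eq_lift
    by (rule inj_on_image_Int[symmetric]) (auto simp: open_polyhedron_def closed_polyhedron_def)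
  also have "open_polyhedron rk hat_forms \<inter> ?I = cell_polyhedron"
    using mem_closed_polyhedron_if_nonconst_pos[OF witness_coords_in_gz_polyhedron]
    by (auto simp: cell_polyhedron_def open_polyhedron_def closed_polyhedron_def)
  finally show ?thesis .
qed

lemma witness_coords_in_cell_polyhedron: "witness_coords \<in> cell_polyhedron"
  using witness_coords_in_hat_polyhedron witness_coords_gz_forms
  by (auto simp: cell_polyhedron_def open_polyhedron_def)

lemma cell_polyhedron_bounded:
  assumes x: "x \<in> cell_polyhedron" and m: "m < rk"
  shows "\<bar>x m\<bar> \<le> (\<Sum>l\<in>{1..n}. \<bar>real_of_int (lam l)\<bar>)"
proof -
  have "x \<in> closed_polyhedron rk gz_forms"
    using x by (intro mem_closed_polyhedron_if_nonconst_pos[OF witness_coords_in_gz_polyhedron])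
      (auto simp: cell_polyhedron_def open_polyhedron_def)
  then have GZ: "lift x \<in> GZ_polytope n lam"
    by (simp add: lift_in_GZ_polytope_iff closed_polyhedron_def)
  obtain i j where p: "free_enum m = (Suc i, j)" using free_enum_mem[OF m] free_pos_Suc by blast
  then have pos: "gz_pos n (Suc i) j" using free_enum_mem[OF m] by (simp add: free_pos_def)
  have "x m = proj (lift x) m"
    using proj_lift x by (simp add: cell_polyhedron_def open_polyhedron_def)
  also have "\<dots> = yext n lam (lift x) (Suc i) j" using m p by (simp add: proj_def yext_Suc)
  finally show ?thesis using GZ_polytope_entry_bound[OF GZ pos] by simp
qed


lemma cell_polyhedron_homeomorphic_ball: "cell_polyhedron homeomorphic open_ball_dim rk"
proof -
  have "finite (hat_forms \<union> {g \<in> gz_forms. nonconst_form rk g})"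
    using finite_hat_forms finite_gz_forms by simp
  then show ?thesis
    using witness_coords_in_cell_polyhedron cell_polyhedron_bounded unfolding cell_polyhedron_def
    by (rule open_polyhedron_homeomorphic_ball)
qed

lemma lift_cell_polyhedron_homeomorphic: "lift ` cell_polyhedron homeomorphic cell_polyhedron"
proof -
  have "cell_polyhedron \<subseteq> coord_space rk" by (auto simp: cell_polyhedron_def open_polyhedron_def)
  then have "homeomorphism cell_polyhedron (lift ` cell_polyhedron) lift proj"
    using homeomorphism_of_subsets[OF homeomorphism_lift] by blast
  then show ?thesis unfolding homeomorphic_def using homeomorphism_symD by blast
qed

end

theorem lemma5p2:
  fixes n :: nat and lam :: "nat \<Rightarrow> int" and a :: "nat \<Rightarrow> nat \<Rightarrow> int"
    and E EL ER :: "nat \<Rightarrow> nat \<Rightarrow> bool"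
  assumes "is_partition n lam"
    and "is_enhanced_GZ n lam a E EL ER"
  shows "cell n lam a E EL ER \<noteq> {} \<and>
         cell n lam a E EL ER homeomorphic open_ball_dim (gz_rank n E)"
proof -
  interpret enhanced_GZ n lam a E EL ER by unfold_locales (rule assms(2))
  have "cell n lam a E EL ER homeomorphic open_ball_dim (gz_rank n E)"
    unfolding cell_eq_lift
    using lift_cell_polyhedron_homeomorphic cell_polyhedron_homeomorphic_ball
    by (rule homeomorphic_trans)
  then show ?thesis using witness_coords_in_cell_polyhedron by (auto simp: cell_eq_lift)
qed

end
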